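(* Let $\mathcal{U}=\{u_1,\ldots,u_M\}\subset\mathbb{R}\setminus\{0\}$ be a fixed finite set of $M\ge 1$ distinct nonzero reals, $u_{\min}=\min_m|u_m|$, $u_{\max}=\max_m|u_m|$, and let $\sigma^2>0$ be fixed. For integers $N>k\ge1$, let $x$ be uniformly distributed on $\mathcal{X}_k^N(\mathcal{U})$ and $y=x+\omega$ with $\omega\sim\mathcal{N}(0,\sigma_{N/k}^2I_N)$ independent of $x$, where $\sigma_{N/k}^2=\sigma^2/\log(N/k)$. Let $\hat{x}(y)\in\mathbb{R}^N$ be any estimator of $x$ given $y$. Define $$C_0=\frac{\sigma^2}{u_{\max}^2}\Big(1-\frac{u_{\max}^2}{2\sigma^2}\Big),\qquad C_1=\frac{\sigma^2}{2u_{\max}^2}\Big(1-\frac{u_{\max}^2}{2\sigma^2}\Big)^2+\frac{(u_{\max}-u_{\min}/2)^2}{2\sigma^2}.$$ If $\sigma^2>u_{\max}^2/2$, then $$\liminf_{N\to\infty}\frac{1}{k}\Big(\mathbb{E}[\|x-\hat{x}(y)\|_2^2]-\mathbb{E}[\|x\|_2^2]\Big)\ge 0$$ holds in the limit where $k,N\to\infty$ with $\log k/\log N\to\gamma$, for every $$\gamma<\min\Big\{\frac{C_0}{C_0+\sigma^2/(u_{\max}u_{\min})},\ \frac{C_1}{C_1+3},\ \frac12\Big\}.$$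
   Context: For $v\in\mathbb{R}^N$, $\mathcal{S}_v=\{n: v_n\neq0\}$ is its support. $\mathcal{X}_k^N(\mathcal{U})$ denotes the set of $x\in\mathbb{R}^N$ with $|\mathcal{S}_x|=k$ and $x_n\in\mathcal{U}$ for all $n\in\mathcal{S}_x$. An estimator is any (measurable) function $\hat{x}:\mathbb{R}^N\to\mathbb{R}^N$. *)

theory Defs
  imports "HOL-Probability.Probability"
begin

text \<open>Vectors in R^N are represented as functions nat => real that vanish at indices >= N.\<close>

definition sparse_set :: "real set \<Rightarrow> nat \<Rightarrow> nat \<Rightarrow> (nat \<Rightarrow> real) set" where
  "sparse_set U N k = {x. (\<forall>i. N \<le> i \<longrightarrow> x i = 0) \<and> card {i. i < N \<and> x i \<noteq> 0} = k
      \<and> (\<forall>i<N. x i \<noteq> 0 \<longrightarrow> x i \<in> U)}"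

definition noise_measure :: "nat \<Rightarrow> real \<Rightarrow> (nat \<Rightarrow> real) measure" where
  "noise_measure N v = PiM {..<N} (\<lambda>_. density lborel (normal_density 0 (sqrt v)))"

definition observe :: "nat \<Rightarrow> (nat \<Rightarrow> real) \<Rightarrow> (nat \<Rightarrow> real) \<Rightarrow> (nat \<Rightarrow> real)" where
  "observe N x \<omega> = restrict (\<lambda>i. x i + \<omega> i) {..<N}"

definition mse :: "real set \<Rightarrow> nat \<Rightarrow> nat \<Rightarrow> real \<Rightarrow> ((nat \<Rightarrow> real) \<Rightarrow> (nat \<Rightarrow> real)) \<Rightarrow> ennreal" where
  "mse U N k v xh =
     (\<Sum>x\<in>sparse_set U N k. \<integral>\<^sup>+ \<omega>. ennreal (\<Sum>i<N. (x i - xh (observe N x \<omega>) i)\<^sup>2) \<partial>noise_measure N v)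
       / of_nat (card (sparse_set U N k))"

definition signal_energy :: "real set \<Rightarrow> nat \<Rightarrow> nat \<Rightarrow> real" where
  "signal_energy U N k =
     (\<Sum>x\<in>sparse_set U N k. \<Sum>i<N. (x i)\<^sup>2) / real (card (sparse_set U N k))"

definition excess :: "real set \<Rightarrow> real \<Rightarrow> nat \<Rightarrow> nat \<Rightarrow> ((nat \<Rightarrow> real) \<Rightarrow> (nat \<Rightarrow> real)) \<Rightarrow> ereal" where
  "excess U s2 N k xh =
     (enn2ereal (mse U N k (s2 / ln (real N / real k)) xh) - ereal (signal_energy U N k)) / ereal (real k)"

end

theory Submission
  imports Defs
begin

text \<open>
  Fix a coordinate \<open>i\<close>. Moving the nonzero entry of \<open>x\<close> at \<open>i\<close> to an empty coordinate \<open>j\<close> multiplies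
  the likelihood of the observation \<open>y\<close> by a ratio of Gaussian likelihood ratios \<open>\<Lambda>\<^sub>u(y j) / \<Lambda>\<^sub>u(y i)\<close>.
  With \<open>K = (N/k)\<^bsup>\<theta>\<^esup>\<close>, \<open>\<theta> < 1\<close>, the denominator is below \<open>K\<close> unless the noise at \<open>i\<close> is large
  (Chebyshev), and the numerators truncated at \<open>K\<close> sum to at least \<open>(N - k)/2\<close> over the empty
  coordinates except with exponentially small probability (Chernoff). Outside these events the posterior
  odds of \<open>x i \<noteq> 0\<close> are at most \<open>\<eta> = 2 k K / (N - k) \<longrightarrow> 0\<close>, and then no estimate of \<open>x i\<close> improves
  on the estimate \<open>0\<close> by more than \<open>u\<^sub>m\<^sub>a\<^sub>x\<^sup>2 \<eta>\<close> times the posterior probability of \<open>x i \<noteq> 0\<close>.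
  Summing over the \<open>k\<close> support coordinates bounds the excess from below by \<open>-\<beta>(k/N)\<close> with
  \<open>\<beta>(r) \<longrightarrow> 0\<close> as \<open>r \<longrightarrow> 0\<close>.
\<close>

section \<open>Gaussian densities and likelihood ratios\<close>

definition normal_measure :: "real \<Rightarrow> real \<Rightarrow> real measure" where
  "normal_measure \<mu> v = density lborel (normal_density \<mu> (sqrt v))"

definition likelihood_ratio :: "real \<Rightarrow> real \<Rightarrow> real \<Rightarrow> real" where
  "likelihood_ratio v u t = exp ((u * t - u\<^sup>2 / 2) / v)"

lemma sets_normal_measure [simp, measurable_cong]: "sets (normal_measure \<mu> v) = sets borel"
  by (simp add: normal_measure_def)

lemma space_normal_measure [simp]: "space (normal_measure \<mu> v) = UNIV"
  by (simp add: normal_measure_def)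

lemma prob_space_normal_measure: "v > 0 \<Longrightarrow> prob_space (normal_measure \<mu> v)"
  unfolding normal_measure_def by (rule prob_space_normal_density) simp

lemma likelihood_ratio_pos: "0 < likelihood_ratio v u t"
  by (simp add: likelihood_ratio_def)

lemma borel_measurable_likelihood_ratio [measurable]: "likelihood_ratio v u \<in> borel_measurable borel"
  by (simp add: likelihood_ratio_def[abs_def])

lemma normal_density_mult_likelihood_ratio:
  assumes "v > 0"
  shows "normal_density 0 (sqrt v) t * likelihood_ratio v u t = normal_density u (sqrt v) t"
proof -
  have "exp (- t\<^sup>2 / (2 * v)) * exp ((u * t - u\<^sup>2 / 2) / v) = exp (- (t - u)\<^sup>2 / (2 * v))"
    unfolding exp_add[symmetric] using assms
    by (intro arg_cong[where f = exp]) (simp add: field_simps power2_eq_square)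
  then show ?thesis
    using assms by (simp add: likelihood_ratio_def normal_density_def)
qed

lemma likelihood_ratio_le:
  assumes "v > 0" and "\<delta> \<ge> 0" and "\<bar>u\<bar> \<le> a" and "\<bar>t\<bar> \<le> a + \<delta>"
  shows "likelihood_ratio v u t \<le> exp ((a\<^sup>2 / 2 + a * \<delta>) / v)"
proof -
  have quadratic: "b * (a + \<delta>) - b\<^sup>2 / 2 \<le> a\<^sup>2 / 2 + a * \<delta>" if "0 \<le> b" "b \<le> a" for b
  proof -
    have "a\<^sup>2 / 2 + a * \<delta> - (b * (a + \<delta>) - b\<^sup>2 / 2) = (a - b) * ((a - b) / 2 + \<delta>)"
      by (simp add: power2_eq_square field_simps)
    also have "\<dots> \<ge> 0"
      using that assms by (intro mult_nonneg_nonneg) auto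
    finally show ?thesis by simp
  qed
  have "u * t - u\<^sup>2 / 2 \<le> \<bar>u\<bar> * (a + \<delta>) - \<bar>u\<bar>\<^sup>2 / 2"
    using assms abs_ge_self[of "u * t"] mult_left_mono[of "\<bar>t\<bar>" "a + \<delta>" "\<bar>u\<bar>"]
    by (simp add: abs_mult)
  also have "\<dots> \<le> a\<^sup>2 / 2 + a * \<delta>"
    using quadratic[of "\<bar>u\<bar>"] assms by simp
  finally show ?thesis
    using assms by (simp add: likelihood_ratio_def divide_right_mono)
qed

lemma integrable_normal_density_mult:
  assumes "0 < \<sigma>" and "f \<in> borel_measurable borel" and "\<And>t. \<bar>f t\<bar> \<le> C"
  shows "integrable lborel (\<lambda>t. normal_density \<mu> \<sigma> t * f t)"
proof (rule Bochner_Integration.integrable_bound)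
  show "integrable lborel (\<lambda>t. C * normal_density \<mu> \<sigma> t)"
    using assms(1) by (intro integrable_mult_right integrable_normal_density)
  show "AE t in lborel. norm (normal_density \<mu> \<sigma> t * f t) \<le> norm (C * normal_density \<mu> \<sigma> t)"
  proof (rule AE_I2)
    fix t
    have "\<bar>f t\<bar> \<le> \<bar>C\<bar>"
      using assms(3)[of t] by linarith
    then show "norm (normal_density \<mu> \<sigma> t * f t) \<le> norm (C * normal_density \<mu> \<sigma> t)"
      by (simp add: abs_mult mult.commute[of "\<bar>C\<bar>"] mult_left_mono)
  qed
qed (use assms(2) in simp)

lemma normal_tail_le:
  assumes v: "v > 0" and \<delta>: "\<delta> > 0"
  shows "(\<integral>t. normal_density \<mu> (sqrt v) t * indicator {t. \<delta> < \<bar>t - \<mu>\<bar>} t \<partial>lborel) \<le> v / \<delta>\<^sup>2"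
proof -
  have "(\<integral>t. normal_density \<mu> (sqrt v) t * indicator {t. \<delta> < \<bar>t - \<mu>\<bar>} t \<partial>lborel)
      \<le> (\<integral>t. normal_density \<mu> (sqrt v) t * (t - \<mu>) ^ (2 * 1) / \<delta>\<^sup>2 \<partial>lborel)"
  proof (rule integral_mono)
    show "integrable lborel (\<lambda>t. normal_density \<mu> (sqrt v) t * indicator {t. \<delta> < \<bar>t - \<mu>\<bar>} t)"
      by (rule integrable_normal_density_mult[where C = 1]) (use v in auto)
    show "integrable lborel (\<lambda>t. normal_density \<mu> (sqrt v) t * (t - \<mu>) ^ (2 * 1) / \<delta>\<^sup>2)"
      using integrable_normal_moment[of "sqrt v" \<mu> 2] v by simp
    fix t
    have "1 \<le> (t - \<mu>)\<^sup>2 / \<delta>\<^sup>2" if "\<delta> < \<bar>t - \<mu>\<bar>"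
    proof -
      have "\<delta>\<^sup>2 \<le> \<bar>t - \<mu>\<bar>\<^sup>2"
        using that \<delta> by (intro power_mono) auto
      then show ?thesis
        using \<delta> by (simp add: le_divide_eq)
    qed
    then show "normal_density \<mu> (sqrt v) t * indicator {t. \<delta> < \<bar>t - \<mu>\<bar>} t
        \<le> normal_density \<mu> (sqrt v) t * (t - \<mu>) ^ (2 * 1) / \<delta>\<^sup>2"
      using mult_left_mono[of 1 "(t - \<mu>)\<^sup>2 / \<delta>\<^sup>2" "normal_density \<mu> (sqrt v) t"]
      by (auto simp: indicator_def)
  qed
  also have "\<dots> = v / \<delta>\<^sup>2"
    using integral_normal_moment_even[of "sqrt v" \<mu> 1] v by simp
  finally show ?thesis .
qed

lemma min_likelihood_ratio_bounds:
  assumes "0 \<le> K"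
  shows "0 \<le> min (likelihood_ratio v u t) K" and "min (likelihood_ratio v u t) K \<le> K"
    and "\<bar>min (likelihood_ratio v u t) K\<bar> \<le> K"
  using assms likelihood_ratio_pos[of v u t] by auto

lemma integral_min_likelihood_ratio_ge:
  assumes v: "v > 0" and \<delta>: "\<delta> > 0" and "\<bar>u\<bar> \<le> a" and K: "exp ((a\<^sup>2 / 2 + a * \<delta>) / v) \<le> K"
  shows "1 - v / \<delta>\<^sup>2 \<le> (\<integral>t. normal_density 0 (sqrt v) t * min (likelihood_ratio v u t) K \<partial>lborel)"
proof -
  let ?p = "normal_density u (sqrt v)"
  have K0: "0 \<le> K"
    using K exp_ge_zero order_trans by blast
  have int_tail: "integrable lborel (\<lambda>t. ?p t * indicator {t. \<delta> < \<bar>t - u\<bar>} t)"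
    by (rule integrable_normal_density_mult[where C = 1]) (use v in auto)
  have "1 - v / \<delta>\<^sup>2 \<le> (\<integral>t. ?p t - ?p t * indicator {t. \<delta> < \<bar>t - u\<bar>} t \<partial>lborel)"
    using normal_tail_le[OF v \<delta>, of u] int_tail v by simp
  also have "\<dots> \<le> (\<integral>t. normal_density 0 (sqrt v) t * min (likelihood_ratio v u t) K \<partial>lborel)"
  proof (rule integral_mono)
    show "integrable lborel (\<lambda>t. ?p t - ?p t * indicator {t. \<delta> < \<bar>t - u\<bar>} t)"
      using int_tail v by simp
    show "integrable lborel (\<lambda>t. normal_density 0 (sqrt v) t * min (likelihood_ratio v u t) K)"
      by (rule integrable_normal_density_mult[where C = K])
        (simp_all add: min_likelihood_ratio_bounds K0 v)
    fix t
    \<comment> \<open>On \<open>\<bar>t - u\<bar> \<le> \<delta>\<close> the truncation is inactive, and the integrand is the density of \<open>N(u, v)\<close>.\<close>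
    show "?p t - ?p t * indicator {t. \<delta> < \<bar>t - u\<bar>} t
        \<le> normal_density 0 (sqrt v) t * min (likelihood_ratio v u t) K"
    proof (cases "\<bar>t - u\<bar> \<le> \<delta>")
      case True
      moreover have "\<bar>t\<bar> \<le> a + \<delta>"
        using True \<open>\<bar>u\<bar> \<le> a\<close> abs_triangle_ineq[of "t - u" u] by simp
      ultimately have "likelihood_ratio v u t \<le> K"
        using likelihood_ratio_le[OF v _ \<open>\<bar>u\<bar> \<le> a\<close>, of \<delta> t] \<delta> K by linarith
      then show ?thesis
        using True normal_density_mult_likelihood_ratio[OF v] by simp
    next
      case False
      then show ?thesis
        using min_likelihood_ratio_bounds(1)[OF K0, of v u t] by simp
    qed
  qed
  finally show ?thesis .
qed

lemma exp_neg_le_one_minus: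
  fixes s :: real
  assumes "0 \<le> s" and "s \<le> 1/4"
  shows "exp (- s) \<le> 1 - 3/4 * s"
proof -
  have "exp (- s) \<le> 1 / (1 + s)"
    using exp_ge_add_one_self[of s] assms by (simp add: exp_minus field_simps)
  also have "\<dots> \<le> 1 - s + s\<^sup>2"
  proof -
    have "(1 - s + s\<^sup>2) * (1 + s) = 1 + s ^ 3"
      by (simp add: algebra_simps power2_eq_square power3_eq_cube)
    then show ?thesis
      using assms by (simp add: divide_le_eq)
  qed
  also have "\<dots> \<le> 1 - 3/4 * s"
    using assms mult_right_mono[of s "1/4" s] by (simp add: power2_eq_square)
  finally show ?thesis .
qed

lemma integral_exp_neg_min_likelihood_ratio_le:
  assumes v: "v > 0" and \<delta>: "\<delta> > 0" and u: "\<bar>u\<bar> \<le> a" and K: "exp ((a\<^sup>2 / 2 + a * \<delta>) / v) \<le> K"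
    and small: "v / \<delta>\<^sup>2 \<le> 1/4"
  shows "(\<integral>t. normal_density 0 (sqrt v) t * exp (- min (likelihood_ratio v u t) K / (4 * K)) \<partial>lborel)
    \<le> 1 - 9 / (64 * K)"
proof -
  let ?p = "normal_density 0 (sqrt v)" and ?m = "\<lambda>t. min (likelihood_ratio v u t) K"
  have K0: "0 < K"
    using K exp_gt_zero less_le_trans by blast
  note m_bounds = min_likelihood_ratio_bounds[OF less_imp_le[OF K0]]
  have m_scaled: "0 \<le> ?m t / (4 * K)" "?m t / (4 * K) \<le> 1/4" for t
    using m_bounds[of v u t] K0 by auto
  have int_m: "integrable lborel (\<lambda>t. ?p t * ?m t)"
    by (rule integrable_normal_density_mult[where C = K]) (simp_all add: m_bounds v)
  have "(\<integral>t. ?p t * exp (- ?m t / (4 * K)) \<partial>lborel) \<le> (\<integral>t. ?p t - 3 / (16 * K) * (?p t * ?m t) \<partial>lborel)"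
  proof (rule integral_mono)
    show "integrable lborel (\<lambda>t. ?p t * exp (- ?m t / (4 * K)))"
      by (rule integrable_normal_density_mult[where C = 1]) (use m_scaled v in simp_all)
    show "integrable lborel (\<lambda>t. ?p t - 3 / (16 * K) * (?p t * ?m t))"
      using int_m v by simp
    fix t
    have "?p t * exp (- (?m t / (4 * K))) \<le> ?p t * (1 - 3/4 * (?m t / (4 * K)))"
      using m_scaled by (intro mult_left_mono exp_neg_le_one_minus) simp_all
    also have "\<dots> = ?p t - 3 / (16 * K) * (?p t * ?m t)"
      using K0 by (simp add: field_simps)
    finally show "?p t * exp (- ?m t / (4 * K)) \<le> ?p t - 3 / (16 * K) * (?p t * ?m t)"
      by simp
  qed
  also have "\<dots> = 1 - 3 / (16 * K) * (\<integral>t. ?p t * ?m t \<partial>lborel)"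
    using int_m v by simp
  also have "\<dots> \<le> 1 - 3 / (16 * K) * (3/4)"
  proof -
    have "3/4 \<le> (\<integral>t. ?p t * ?m t \<partial>lborel)"
      using integral_min_likelihood_ratio_ge[OF v \<delta> u K] small by linarith
    then show ?thesis
      using K0 by (intro diff_left_mono mult_left_mono) auto
  qed
  finally show ?thesis by simp
qed

lemma nn_integral_normal_measure:
  assumes "v > 0" and "f \<in> borel_measurable borel" and "\<And>t. 0 \<le> f t" and "\<And>t. f t \<le> C"
  shows "(\<integral>\<^sup>+t. f t \<partial>normal_measure \<mu> v) = ennreal (\<integral>t. normal_density \<mu> (sqrt v) t * f t \<partial>lborel)"
proof -
  have "(\<integral>\<^sup>+t. f t \<partial>normal_measure \<mu> v) = (\<integral>\<^sup>+t. ennreal (normal_density \<mu> (sqrt v) t) * ennreal (f t) \<partial>lborel)"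
    unfolding normal_measure_def by (rule nn_integral_density) (use assms(2) in auto)
  also have "\<dots> = (\<integral>\<^sup>+t. ennreal (normal_density \<mu> (sqrt v) t * f t) \<partial>lborel)"
    by (simp add: ennreal_mult assms(3))
  also have "\<dots> = ennreal (\<integral>t. normal_density \<mu> (sqrt v) t * f t \<partial>lborel)"
  proof (rule nn_integral_eq_integral)
    show "integrable lborel (\<lambda>t. normal_density \<mu> (sqrt v) t * f t)"
      by (rule integrable_normal_density_mult[where C = C]) (use assms order_trans[OF assms(3)] in auto)
  qed (use assms(3) in simp)
  finally show ?thesis .
qed

lemma emeasure_normal_measure:
  assumes "v > 0" and "A \<in> sets borel"
  shows "emeasure (normal_measure \<mu> v) A = ennreal (\<integral>t. normal_density \<mu> (sqrt v) t * indicator A t \<partial>lborel)"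
proof -
  have "emeasure (normal_measure \<mu> v) A = (\<integral>\<^sup>+t. ennreal (indicator A t) \<partial>normal_measure \<mu> v)"
    using assms(2) by (simp add: ennreal_indicator)
  also have "\<dots> = ennreal (\<integral>t. normal_density \<mu> (sqrt v) t * indicator A t \<partial>lborel)"
    using assms by (intro nn_integral_normal_measure[where C = 1]) auto
  finally show ?thesis .
qed

lemma nn_integral_exp_neg_min_likelihood_ratio_le:
  assumes v: "v > 0" and \<delta>: "\<delta> > 0" and u: "\<bar>u\<bar> \<le> a" and K: "exp ((a\<^sup>2 / 2 + a * \<delta>) / v) \<le> K"
    and small: "v / \<delta>\<^sup>2 \<le> 1/4"
  shows "(\<integral>\<^sup>+t. ennreal (exp (- min (likelihood_ratio v u t) K / (4 * K))) \<partial>normal_measure 0 v)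
    \<le> ennreal (1 - 9 / (64 * K))"
proof -
  have K0: "0 < K"
    using K exp_gt_zero less_le_trans by blast
  have "(\<integral>\<^sup>+t. ennreal (exp (- min (likelihood_ratio v u t) K / (4 * K))) \<partial>normal_measure 0 v)
      = ennreal (\<integral>t. normal_density 0 (sqrt v) t * exp (- min (likelihood_ratio v u t) K / (4 * K)) \<partial>lborel)"
    using min_likelihood_ratio_bounds(1)[OF less_imp_le[OF K0]] K0
    by (intro nn_integral_normal_measure[where C = 1] v) (simp_all add: divide_nonneg_pos)
  also have "\<dots> \<le> ennreal (1 - 9 / (64 * K))"
    using integral_exp_neg_min_likelihood_ratio_le[OF v \<delta> u K small] by (simp add: ennreal_leI)
  finally show ?thesis .
qed

section \<open>The noise and the observation\<close>

lemma product_prob_space_normal_measure: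
  "v > 0 \<Longrightarrow> product_prob_space (\<lambda>j. normal_measure (\<mu> j) v)"
  by (simp add: product_prob_space_def product_sigma_finite_def product_prob_space_axioms_def
      prob_space_normal_measure prob_space_imp_sigma_finite)

lemma noise_measure_eq: "noise_measure N v = PiM {..<N} (\<lambda>_. normal_measure 0 v)"
  by (simp add: noise_measure_def normal_measure_def)

lemma space_noise_measure: "space (noise_measure N v) = PiE {..<N} (\<lambda>_. UNIV)"
  by (simp add: noise_measure_eq space_PiM)

lemma prob_space_noise_measure: "v > 0 \<Longrightarrow> prob_space (noise_measure N v)"
  unfolding noise_measure_eq by (intro prob_space_PiM prob_space_normal_measure)

lemma borel_measurable_noise_measure_component:
  assumes "j < N"
  shows "(\<lambda>\<omega>. \<omega> j) \<in> borel_measurable (noise_measure N v)"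
proof -
  have "j \<in> {..<N}"
    using assms by simp
  then show ?thesis
    unfolding noise_measure_eq by measurable
qed

lemma borel_measurable_noise_measure_sum:
  fixes g :: "real \<Rightarrow> real"
  assumes "J \<subseteq> {..<N}" and "g \<in> borel_measurable borel"
  shows "(\<lambda>\<omega>. \<Sum>j\<in>J. g (\<omega> j)) \<in> borel_measurable (noise_measure N v)"
  using assms
  by (intro borel_measurable_sum measurable_compose[OF borel_measurable_noise_measure_component assms(2)]) auto

lemma nn_integral_noise_measure_prod:
  assumes v: "v > 0" and J: "J \<subseteq> {..<N}" and [measurable]: "f \<in> borel_measurable borel"
  shows "(\<integral>\<^sup>+\<omega>. (\<Prod>j\<in>J. f (\<omega> j)) \<partial>noise_measure N v) = (\<integral>\<^sup>+t. f t \<partial>normal_measure 0 v) ^ card J"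
proof -
  interpret product_prob_space "\<lambda>_. normal_measure 0 v" "{..<N}"
    using product_prob_space_normal_measure[OF v] .
  define g where "g j t = (if j \<in> J then f t else 1)" for j t
  have [measurable]: "g j \<in> borel_measurable (normal_measure 0 v)" for j
    unfolding g_def by measurable
  have "(\<integral>\<^sup>+\<omega>. (\<Prod>j\<in>J. f (\<omega> j)) \<partial>noise_measure N v) = (\<integral>\<^sup>+\<omega>. (\<Prod>j<N. g j (\<omega> j)) \<partial>noise_measure N v)"
    using J by (intro nn_integral_cong) (simp add: g_def prod.If_cases Int_absorb1)
  also have "\<dots> = (\<Prod>j<N. \<integral>\<^sup>+t. g j t \<partial>normal_measure 0 v)"
    unfolding noise_measure_eq by (rule product_nn_integral_prod) simp_all
  also have "\<dots> = (\<Prod>j<N. if j \<in> J then (\<integral>\<^sup>+t. f t \<partial>normal_measure 0 v) else 1)"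
    using prob_space.emeasure_space_1[OF prob_space_normal_measure[OF v]]
    by (intro prod.cong refl) (simp add: g_def)
  also have "\<dots> = (\<integral>\<^sup>+t. f t \<partial>normal_measure 0 v) ^ card J"
    using J by (simp add: prod.If_cases Int_absorb1)
  finally show ?thesis .
qed

lemma emeasure_noise_measure_abs_gt:
  assumes v: "v > 0" and \<delta>: "\<delta> > 0" and i: "i < N"
  shows "emeasure (noise_measure N v) {\<omega> \<in> space (noise_measure N v). \<delta> < \<bar>\<omega> i\<bar>} \<le> ennreal (v / \<delta>\<^sup>2)"
proof -
  interpret product_prob_space "\<lambda>_. normal_measure 0 v" "{..<N}"
    using product_prob_space_normal_measure[OF v] .
  have "emeasure (noise_measure N v) {\<omega> \<in> space (noise_measure N v). \<delta> < \<bar>\<omega> i\<bar>}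
      = emeasure (normal_measure 0 v) {t. \<delta> < \<bar>t\<bar>}"
    using emeasure_PiM_Collect_single[of i "{t. \<delta> < \<bar>t\<bar>}"] i by (simp add: noise_measure_eq)
  also have "\<dots> = ennreal (\<integral>t. normal_density 0 (sqrt v) t * indicator {t. \<delta> < \<bar>t\<bar>} t \<partial>lborel)"
    using v by (intro emeasure_normal_measure) measurable
  also have "\<dots> \<le> ennreal (v / \<delta>\<^sup>2)"
    using normal_tail_le[OF v \<delta>, of 0] by (simp add: ennreal_leI)
  finally show ?thesis .
qed

lemma indicator_sum_less_le_exp:
  fixes g :: "'a \<Rightarrow> real"
  assumes "finite J" and "0 < d"
  shows "indicator {\<omega> \<in> A. (\<Sum>j\<in>J. g (\<omega> j)) < c} \<omega>
    \<le> ennreal (exp (c / d)) * (\<Prod>j\<in>J. ennreal (exp (- g (\<omega> j) / d)))"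
proof (cases "\<omega> \<in> A \<and> (\<Sum>j\<in>J. g (\<omega> j)) < c")
  case True
  have "(\<Prod>j\<in>J. exp (- g (\<omega> j) / d)) = exp (- (\<Sum>j\<in>J. g (\<omega> j)) / d)"
    by (simp add: exp_sum[OF assms(1), symmetric] sum_negf sum_divide_distrib)
  then have prod_eq: "(\<Prod>j\<in>J. ennreal (exp (- g (\<omega> j) / d))) = ennreal (exp (- (\<Sum>j\<in>J. g (\<omega> j)) / d))"
    by (simp add: prod_ennreal)
  have "indicator {\<omega> \<in> A. (\<Sum>j\<in>J. g (\<omega> j)) < c} \<omega> = ennreal 1"
    using True by simp
  also have "\<dots> \<le> ennreal (exp (c / d) * exp (- (\<Sum>j\<in>J. g (\<omega> j)) / d))"
    using True assms(2) by (intro ennreal_leI) (simp add: exp_add[symmetric] diff_divide_distrib[symmetric])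
  also have "\<dots> = ennreal (exp (c / d)) * (\<Prod>j\<in>J. ennreal (exp (- g (\<omega> j) / d)))"
    unfolding prod_eq by (rule ennreal_mult) simp_all
  finally show ?thesis .
qed simp

lemma emeasure_noise_measure_sum_min_likelihood_ratio_lt:
  assumes v: "v > 0" and \<delta>: "\<delta> > 0" and u: "\<bar>u\<bar> \<le> a" and K: "exp ((a\<^sup>2 / 2 + a * \<delta>) / v) \<le> K"
    and small: "v / \<delta>\<^sup>2 \<le> 1/4" and J: "J \<subseteq> {..<N}"
  shows "emeasure (noise_measure N v)
      {\<omega> \<in> space (noise_measure N v). (\<Sum>j\<in>J. min (likelihood_ratio v u (\<omega> j)) K) < c}
    \<le> ennreal (exp (c / (4 * K)) * (1 - 9 / (64 * K)) ^ card J)"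
proof -
  let ?m = "\<lambda>t. min (likelihood_ratio v u t) K" and ?M = "noise_measure N v"
  let ?E = "{\<omega> \<in> space ?M. (\<Sum>j\<in>J. ?m (\<omega> j)) < c}"
  have "0 \<le> a"
    using u abs_ge_zero[of u] by linarith
  then have "1 \<le> exp ((a\<^sup>2 / 2 + a * \<delta>) / v)"
    using v \<delta> by simp
  then have K1: "1 \<le> K"
    using K by linarith
  have [measurable]: "(\<lambda>\<omega>. \<omega> j) \<in> borel_measurable ?M" if "j \<in> J" for j
    using that J by (intro borel_measurable_noise_measure_component) auto
  have "emeasure ?M ?E = (\<integral>\<^sup>+\<omega>. indicator ?E \<omega> \<partial>?M)"
    by (subst nn_integral_indicator) measurable
  also have "\<dots> \<le> (\<integral>\<^sup>+\<omega>. ennreal (exp (c / (4 * K))) * (\<Prod>j\<in>J. ennreal (exp (- ?m (\<omega> j) / (4 * K)))) \<partial>?M)"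
    using J K1 by (intro nn_integral_mono indicator_sum_less_le_exp) (auto intro: finite_subset)
  also have "\<dots> = ennreal (exp (c / (4 * K))) * (\<integral>\<^sup>+\<omega>. (\<Prod>j\<in>J. ennreal (exp (- ?m (\<omega> j) / (4 * K)))) \<partial>?M)"
    by (rule nn_integral_cmult) measurable
  also have "\<dots> = ennreal (exp (c / (4 * K))) * (\<integral>\<^sup>+t. ennreal (exp (- ?m t / (4 * K))) \<partial>normal_measure 0 v) ^ card J"
  proof -
    have f: "(\<lambda>t. ennreal (exp (- ?m t / (4 * K)))) \<in> borel_measurable borel"
      by measurable
    show ?thesis
      by (simp only: nn_integral_noise_measure_prod[OF v J f])
  qed
  also have "\<dots> \<le> ennreal (exp (c / (4 * K))) * ennreal (1 - 9 / (64 * K)) ^ card J"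
    using nn_integral_exp_neg_min_likelihood_ratio_le[OF v \<delta> u K small]
    by (intro mult_left_mono power_mono) simp_all
  also have "\<dots> = ennreal (exp (c / (4 * K)) * (1 - 9 / (64 * K)) ^ card J)"
    using K1 by (simp add: ennreal_mult ennreal_power)
  finally show ?thesis .
qed

definition obs_density :: "nat \<Rightarrow> real \<Rightarrow> (nat \<Rightarrow> real) \<Rightarrow> (nat \<Rightarrow> real) \<Rightarrow> real" where
  "obs_density N v x y = (\<Prod>j<N. normal_density (x j) (sqrt v) (y j))"

lemma obs_density_nonneg: "0 \<le> obs_density N v x y"
  by (simp add: obs_density_def prod_nonneg)

lemma borel_measurable_obs_density [measurable]:
  "obs_density N v x \<in> borel_measurable (PiM {..<N} (\<lambda>_. lborel))"
  unfolding obs_density_def by measurable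

lemma borel_measurable_observe [measurable]:
  "observe N x \<in> measurable (noise_measure N v) (PiM {..<N} (\<lambda>_. lborel))"
  unfolding observe_def noise_measure_eq by (intro measurable_restrict) measurable

lemma emeasure_normal_measure_shift:
  assumes [measurable]: "A \<in> sets borel"
  shows "emeasure (normal_measure 0 v) {t. \<mu> + t \<in> A} = emeasure (normal_measure \<mu> v) A"
proof -
  let ?f = "\<lambda>s. ennreal (normal_density \<mu> (sqrt v) s) * indicator A s"
  have [measurable]: "?f \<in> borel_measurable borel"
    by measurable
  have "emeasure (normal_measure \<mu> v) A = (\<integral>\<^sup>+s. ?f s \<partial>lborel)"
    unfolding normal_measure_def by (rule emeasure_density) measurable
  also have "\<dots> = (\<integral>\<^sup>+s. ?f (\<mu> + 1 * s) \<partial>lborel)"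
    using nn_integral_real_affine[of ?f 1 \<mu>] by simp
  also have "\<dots> = (\<integral>\<^sup>+s. ennreal (normal_density 0 (sqrt v) s) * indicator {t. \<mu> + t \<in> A} s \<partial>lborel)"
    by (intro nn_integral_cong) (simp add: indicator_def normal_density_def)
  also have "\<dots> = emeasure (normal_measure 0 v) {t. \<mu> + t \<in> A}"
    unfolding normal_measure_def by (rule emeasure_density[symmetric]) measurable
  finally show ?thesis ..
qed

lemma vimage_observe_PiE:
  "observe N x -` PiE {..<N} A \<inter> space (noise_measure N v) = PiE {..<N} (\<lambda>j. {t. x j + t \<in> A j})"
proof (rule set_eqI)
  fix \<omega>
  show "\<omega> \<in> observe N x -` PiE {..<N} A \<inter> space (noise_measure N v) \<longleftrightarrow> \<omega> \<in> PiE {..<N} (\<lambda>j. {t. x j + t \<in> A j})"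
    unfolding space_noise_measure observe_def vimage_def Int_iff mem_Collect_eq restrict_PiE_iff PiE_iff
    by simp
qed

lemma distr_observe:
  assumes v: "v > 0"
  shows "distr (noise_measure N v) (PiM {..<N} (\<lambda>_. lborel)) (observe N x) = PiM {..<N} (\<lambda>j. normal_measure (x j) v)"
proof -
  interpret Q: product_prob_space "\<lambda>j. normal_measure (x j) v" "{..<N}"
    using product_prob_space_normal_measure[OF v] .
  interpret P: product_prob_space "\<lambda>_. normal_measure 0 v" "{..<N}"
    using product_prob_space_normal_measure[OF v] .
  show ?thesis
  proof (rule Q.PiM_eqI)
    fix A assume A: "\<And>j. j \<in> {..<N} \<Longrightarrow> A j \<in> sets (normal_measure (x j) v)"
    have "PiE {..<N} A \<in> sets (PiM {..<N} (\<lambda>_. lborel))"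
      using A by (intro sets_PiM_I_finite) simp_all
    then have "emeasure (distr (noise_measure N v) (PiM {..<N} (\<lambda>_. lborel)) (observe N x)) (PiE {..<N} A)
        = emeasure (noise_measure N v) (PiE {..<N} (\<lambda>j. {t. x j + t \<in> A j}))"
      by (simp add: emeasure_distr vimage_observe_PiE)
    also have "\<dots> = (\<Prod>j<N. emeasure (normal_measure 0 v) {t. x j + t \<in> A j})"
    proof -
      have "{t. x j + t \<in> A j} \<in> sets borel" if "j < N" for j
      proof -
        have [measurable]: "A j \<in> sets borel"
          using A that by simp
        show ?thesis
          by measurable
      qed
      then show ?thesis
        unfolding noise_measure_eq by (subst P.emeasure_PiM) simp_all
    qed
    also have "\<dots> = (\<Prod>j<N. emeasure (normal_measure (x j) v) (A j))"
      using A by (intro prod.cong refl emeasure_normal_measure_shift) simp_all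
    finally show "emeasure (distr (noise_measure N v) (PiM {..<N} (\<lambda>_. lborel)) (observe N x)) (PiE {..<N} A)
        = (\<Prod>j\<in>{..<N}. emeasure (normal_measure (x j) v) (A j))"
      by simp
  qed (simp, unfold sets_distr, rule sets_PiM_cong, simp_all)
qed

lemma density_obs_density:
  assumes v: "v > 0"
  shows "density (PiM {..<N} (\<lambda>_. lborel)) (obs_density N v x) = PiM {..<N} (\<lambda>j. normal_measure (x j) v)"
proof -
  interpret Q: product_prob_space "\<lambda>j. normal_measure (x j) v" "{..<N}"
    using product_prob_space_normal_measure[OF v] .
  interpret L: product_sigma_finite "\<lambda>_::nat. lborel :: real measure"
    by (simp add: product_sigma_finite_def lborel.sigma_finite_measure_axioms)
  show ?thesis
  proof (rule Q.PiM_eqI)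
    fix A assume A: "\<And>j. j \<in> {..<N} \<Longrightarrow> A j \<in> sets (normal_measure (x j) v)"
    let ?f = "\<lambda>j s. ennreal (normal_density (x j) (sqrt v) s) * indicator (A j) s"
    have f_meas: "?f j \<in> borel_measurable lborel" if "j < N" for j
    proof -
      have [measurable]: "A j \<in> sets borel"
        using A that by simp
      show ?thesis
        by measurable
    qed
    have "PiE {..<N} A \<in> sets (PiM {..<N} (\<lambda>_. lborel))"
      using A by (intro sets_PiM_I_finite) simp_all
    then have "emeasure (density (PiM {..<N} (\<lambda>_. lborel)) (obs_density N v x)) (PiE {..<N} A)
        = (\<integral>\<^sup>+y. ennreal (obs_density N v x y) * indicator (PiE {..<N} A) y \<partial>PiM {..<N} (\<lambda>_. lborel))"
      by (rule emeasure_density[rotated]) measurable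
    also have "\<dots> = (\<integral>\<^sup>+y. (\<Prod>j<N. ?f j (y j)) \<partial>PiM {..<N} (\<lambda>_. lborel))"
    proof (rule nn_integral_cong)
      fix y assume "y \<in> space (PiM {..<N} (\<lambda>_. lborel :: real measure))"
      then have "indicator (PiE {..<N} A) y = (\<Prod>j<N. indicator (A j) (y j) :: ennreal)"
        by (auto simp: indicator_def space_PiM PiE_iff)
      then show "ennreal (obs_density N v x y) * indicator (PiE {..<N} A) y = (\<Prod>j<N. ?f j (y j))"
        by (simp add: obs_density_def prod.distrib prod_ennreal)
    qed
    also have "\<dots> = (\<Prod>j<N. \<integral>\<^sup>+s. ?f j s \<partial>lborel)"
      using f_meas by (intro L.product_nn_integral_prod) simp_all
    also have "\<dots> = (\<Prod>j<N. emeasure (normal_measure (x j) v) (A j))"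
      using A unfolding normal_measure_def by (intro prod.cong refl emeasure_density[symmetric]) simp_all
    finally show "emeasure (density (PiM {..<N} (\<lambda>_. lborel)) (obs_density N v x)) (PiE {..<N} A)
        = (\<Prod>j\<in>{..<N}. emeasure (normal_measure (x j) v) (A j))"
      by simp
  qed (simp, unfold sets_density, rule sets_PiM_cong, simp_all)
qed

lemma nn_integral_observe:
  assumes v: "v > 0" and [measurable]: "h \<in> borel_measurable (PiM {..<N} (\<lambda>_. lborel))"
  shows "(\<integral>\<^sup>+\<omega>. h (observe N x \<omega>) \<partial>noise_measure N v)
    = (\<integral>\<^sup>+y. ennreal (obs_density N v x y) * h y \<partial>PiM {..<N} (\<lambda>_. lborel))"
proof -
  have "(\<integral>\<^sup>+\<omega>. h (observe N x \<omega>) \<partial>noise_measure N v)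
      = (\<integral>\<^sup>+y. h y \<partial>distr (noise_measure N v) (PiM {..<N} (\<lambda>_. lborel)) (observe N x))"
    by (rule nn_integral_distr[symmetric]) auto
  also have "\<dots> = (\<integral>\<^sup>+y. h y \<partial>density (PiM {..<N} (\<lambda>_. lborel)) (obs_density N v x))"
    by (simp add: distr_observe[OF v] density_obs_density[OF v])
  also have "\<dots> = (\<integral>\<^sup>+y. ennreal (obs_density N v x y) * h y \<partial>PiM {..<N} (\<lambda>_. lborel))"
    by (rule nn_integral_density) auto
  finally show ?thesis .
qed

lemma nn_integral_sum_obs_density:
  assumes v: "v > 0" and X: "finite X"
    and [measurable]: "\<And>x. x \<in> X \<Longrightarrow> f x \<in> borel_measurable (PiM {..<N} (\<lambda>_. lborel))"
  shows "(\<integral>\<^sup>+y. (\<Sum>x\<in>X. ennreal (obs_density N v x y) * f x y) \<partial>PiM {..<N} (\<lambda>_. lborel))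
    = (\<Sum>x\<in>X. \<integral>\<^sup>+\<omega>. f x (observe N x \<omega>) \<partial>noise_measure N v)"
  using X by (subst nn_integral_sum) (auto simp: nn_integral_observe[OF v])

section \<open>Sparse vectors and posterior odds\<close>

lemma finite_sparse_set: "finite U \<Longrightarrow> finite (sparse_set U N k)"
proof -
  assume "finite U"
  then have "finite {f. \<forall>i. (i \<in> {..<N} \<longrightarrow> f i \<in> insert 0 U) \<and> (i \<notin> {..<N} \<longrightarrow> f i = (0::real))}"
    by (intro finite_set_of_finite_funs) auto
  moreover have "sparse_set U N k \<subseteq> {f. \<forall>i. (i \<in> {..<N} \<longrightarrow> f i \<in> insert 0 U) \<and> (i \<notin> {..<N} \<longrightarrow> f i = 0)}"
    unfolding sparse_set_def by auto
  ultimately show ?thesis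
    by (rule finite_subset[rotated])
qed

lemma sparse_setD:
  assumes "x \<in> sparse_set U N k"
  shows "card {i. i < N \<and> x i \<noteq> 0} = k" and "\<And>i. i < N \<Longrightarrow> x i \<noteq> 0 \<Longrightarrow> x i \<in> U"
    and "\<And>i. N \<le> i \<Longrightarrow> x i = 0"
  using assms by (auto simp: sparse_set_def)

lemma card_zeros_sparse_set:
  assumes "x \<in> sparse_set U N k"
  shows "card {j. j < N \<and> x j = 0} = N - k"
proof -
  have "{j. j < N \<and> x j = 0} \<union> {j. j < N \<and> x j \<noteq> 0} = {..<N}"
    by auto
  moreover have "card ({j. j < N \<and> x j = 0} \<union> {j. j < N \<and> x j \<noteq> 0})
      = card {j. j < N \<and> x j = 0} + card {j. j < N \<and> x j \<noteq> 0}"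
    by (rule card_Un_disjoint) auto
  ultimately show ?thesis
    using sparse_setD(1)[OF assms] by simp
qed

definition move_entry :: "nat \<Rightarrow> nat \<Rightarrow> (nat \<Rightarrow> real) \<Rightarrow> nat \<Rightarrow> real" where
  "move_entry i j x = x(i := 0, j := x i)"

lemma move_entry_in_sparse_set:
  assumes x: "x \<in> sparse_set U N k" and i: "i < N" "x i \<noteq> 0" and j: "j < N" "x j = 0"
  shows "move_entry i j x \<in> sparse_set U N k"
proof -
  let ?S = "{l. l < N \<and> x l \<noteq> 0}"
  have "i \<noteq> j"
    using i j by auto
  then have "{l. l < N \<and> move_entry i j x l \<noteq> 0} = insert j (?S - {i})"
    using i j by (auto simp: move_entry_def)
  moreover have "card (insert j (?S - {i})) = k"
  proof -
    have "0 < card ?S"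
      using i by (auto simp: card_gt_0_iff)
    then show ?thesis
      using sparse_setD(1)[OF x] i j by (simp add: card_Diff_singleton)
  qed
  ultimately show ?thesis
    using sparse_setD[OF x] i j \<open>i \<noteq> j\<close> by (auto simp: sparse_set_def move_entry_def)
qed

lemma move_entry_inj:
  assumes "x i \<noteq> 0" and "x j = 0" and "x' j = 0" and "move_entry i j x = move_entry i j x'"
  shows "x = x'"
proof
  fix l
  have "i \<noteq> j"
    using assms by auto
  moreover have "move_entry i j x l = move_entry i j x' l" and "move_entry i j x j = move_entry i j x' j"
    using assms(4) by simp_all
  ultimately show "x l = x' l"
    using assms by (cases "l = i"; cases "l = j") (simp_all add: move_entry_def)
qed

text \<open>Every vector with \<open>x i = 0\<close> arises from at most \<open>k\<close> pairs \<open>(x', j)\<close> with \<open>x' i \<noteq> 0\<close>,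
  namely one for each \<open>j\<close> in its support.\<close>

lemma sum_move_entry_le:
  assumes U: "finite U" and i: "i < N" and F: "\<And>x. 0 \<le> F x"
  shows "(\<Sum>x\<in>{x\<in>sparse_set U N k. x i \<noteq> 0}. \<Sum>j\<in>{j. j < N \<and> x j = 0}. F (move_entry i j x))
    \<le> real k * (\<Sum>x\<in>{x\<in>sparse_set U N k. x i = 0}. F x)"
proof -
  let ?X = "sparse_set U N k"
  let ?P = "SIGMA x:{x\<in>?X. x i \<noteq> 0}. {j. j < N \<and> x j = 0}"
  let ?Q = "SIGMA x:{x\<in>?X. x i = 0}. {j. j < N \<and> x j \<noteq> 0}"
  let ?h = "\<lambda>(x, j). (move_entry i j x, j)"
  have finX: "finite ?X"
    using finite_sparse_set[OF U] .
  have "inj_on ?h ?P"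
  proof (rule inj_onI)
    fix p q assume p: "p \<in> ?P" and q: "q \<in> ?P" and pq: "?h p = ?h q"
    obtain x j x' j' where [simp]: "p = (x, j)" "q = (x', j')"
      by (cases p, cases q)
    from pq have "j' = j" and "move_entry i j x = move_entry i j x'"
      by auto
    with p q show "p = q"
      using move_entry_inj[of x i j x'] by simp
  qed
  moreover have "?h ` ?P \<subseteq> ?Q"
  proof (rule image_subsetI)
    fix p assume "p \<in> ?P"
    then obtain x j where p: "p = (x, j)" "x \<in> ?X" "x i \<noteq> 0" "j < N" "x j = 0"
      by auto
    then have "i \<noteq> j"
      by auto
    then show "?h p \<in> ?Q"
      using move_entry_in_sparse_set[OF p(2) i p(3-5)] p by (simp add: move_entry_def)
  qed
  ultimately have "(\<Sum>p\<in>?P. F (fst (?h p))) \<le> (\<Sum>q\<in>?Q. F (fst q))"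
    using finX F by (subst sum.reindex[symmetric, unfolded comp_def]) (auto intro!: sum_mono2)
  moreover have "(\<Sum>p\<in>?P. F (fst (?h p)))
      = (\<Sum>x\<in>{x\<in>?X. x i \<noteq> 0}. \<Sum>j\<in>{j. j < N \<and> x j = 0}. F (move_entry i j x))"
    using finX by (subst sum.Sigma) (auto simp: case_prod_beta)
  moreover have "(\<Sum>x\<in>{x\<in>?X. x i = 0}. \<Sum>j\<in>{j. j < N \<and> x j \<noteq> 0}. F x) = (\<Sum>q\<in>?Q. F (fst q))"
    using finX by (subst sum.Sigma) (auto simp: case_prod_beta)
  moreover have "(\<Sum>x\<in>{x\<in>?X. x i = 0}. \<Sum>j\<in>{j. j < N \<and> x j \<noteq> 0}. F x) = (\<Sum>x\<in>{x\<in>?X. x i = 0}. real k * F x)"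
    by (intro sum.cong refl) (auto simp: sparse_setD(1))
  ultimately show ?thesis
    by (simp add: sum_distrib_left)
qed

lemma obs_density_move_entry:
  assumes v: "v > 0" and i: "i < N" and j: "j < N" and ij: "i \<noteq> j" and xj: "x j = 0"
  shows "obs_density N v (move_entry i j x) y * likelihood_ratio v (x i) (y i)
    = obs_density N v x y * likelihood_ratio v (x i) (y j)"
proof -
  let ?p = "\<lambda>x l. normal_density (x l) (sqrt v) (y l)"
  have split: "prod f {..<N} = f i * f j * prod f ({..<N} - {i} - {j})" for f :: "nat \<Rightarrow> real"
    using i j ij by (simp add: prod.remove[of "{..<N}" i] prod.remove[of "{..<N} - {i}" j])
  have rest: "prod (?p (move_entry i j x)) ({..<N} - {i} - {j}) = prod (?p x) ({..<N} - {i} - {j})"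
    by (intro prod.cong) (auto simp: move_entry_def)
  have "?p (move_entry i j x) i * likelihood_ratio v (x i) (y i) = ?p x i"
    using normal_density_mult_likelihood_ratio[OF v] ij by (simp add: move_entry_def)
  moreover have "?p (move_entry i j x) j = ?p x j * likelihood_ratio v (x i) (y j)"
    using normal_density_mult_likelihood_ratio[OF v] xj by (simp add: move_entry_def)
  ultimately show ?thesis
    unfolding obs_density_def split rest by (simp add: algebra_simps)
qed

text \<open>Unnormalised posterior probabilities of \<open>x i \<noteq> 0\<close> and of \<open>x i = 0\<close> given the observation \<open>y\<close>,
  for \<open>x\<close> uniform on \<open>sparse_set U N k\<close>.\<close>

definition active_weight :: "real set \<Rightarrow> nat \<Rightarrow> nat \<Rightarrow> real \<Rightarrow> nat \<Rightarrow> (nat \<Rightarrow> real) \<Rightarrow> real" where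
  "active_weight U N k v i y = (\<Sum>x\<in>{x\<in>sparse_set U N k. x i \<noteq> 0}. obs_density N v x y)"

definition inactive_weight :: "real set \<Rightarrow> nat \<Rightarrow> nat \<Rightarrow> real \<Rightarrow> nat \<Rightarrow> (nat \<Rightarrow> real) \<Rightarrow> real" where
  "inactive_weight U N k v i y = (\<Sum>x\<in>{x\<in>sparse_set U N k. x i = 0}. obs_density N v x y)"

lemma borel_measurable_active_weight [measurable]:
  "active_weight U N k v i \<in> borel_measurable (PiM {..<N} (\<lambda>_. lborel))"
  unfolding active_weight_def by measurable

lemma borel_measurable_inactive_weight [measurable]:
  "inactive_weight U N k v i \<in> borel_measurable (PiM {..<N} (\<lambda>_. lborel))"
  unfolding inactive_weight_def by measurable

lemma sum_min_le_sum_diff: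
  fixes f :: "'a \<Rightarrow> real"
  assumes "finite A" and "B \<subseteq> A" and "\<And>j. 0 \<le> f j"
  shows "(\<Sum>j\<in>A. min (f j) K) \<le> (\<Sum>j\<in>A - B. f j) + real (card B) * K"
proof -
  have "(\<Sum>j\<in>A. min (f j) K) = (\<Sum>j\<in>A - B. min (f j) K) + (\<Sum>j\<in>B. min (f j) K)"
    using assms by (metis sum.subset_diff)
  also have "\<dots> \<le> (\<Sum>j\<in>A - B. f j) + (\<Sum>j\<in>B. K)"
    by (intro add_mono sum_mono) auto
  finally show ?thesis
    by simp
qed

lemma obs_density_le_sum_move_entry:
  assumes v: "v > 0" and i: "i < N" and K: "K > 0"
    and x: "x \<in> sparse_set U N k" "x i \<noteq> 0"
    and LR_i: "likelihood_ratio v (x i) (y i) \<le> K"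
    and LR_sum: "real (N - k) / 2 + real k * K \<le> (\<Sum>j<N. min (likelihood_ratio v (x i) (y j)) K)"
  shows "obs_density N v x y * (real (N - k) / (2 * K))
    \<le> (\<Sum>j\<in>{j. j < N \<and> x j = 0}. obs_density N v (move_entry i j x) y)"
proof -
  let ?Z = "{j. j < N \<and> x j = 0}" and ?G = "obs_density N v x y" and ?L = "\<lambda>j. likelihood_ratio v (x i) (y j)"
  have L_pos: "0 < ?L j" for j
    by (rule likelihood_ratio_pos)
  have G_nonneg: "0 \<le> ?G"
    by (rule obs_density_nonneg)
  have "{..<N} - {j. j < N \<and> x j \<noteq> 0} = ?Z"
    by auto
  then have "(\<Sum>j<N. min (?L j) K) \<le> (\<Sum>j\<in>?Z. ?L j) + real k * K"
    using sum_min_le_sum_diff[of "{..<N}" "{j. j < N \<and> x j \<noteq> 0}" ?L K] L_pos sparse_setD(1)[OF x(1)]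
    by (simp add: less_imp_le subset_eq)
  then have "real (N - k) / 2 / K \<le> (\<Sum>j\<in>?Z. ?L j) / K"
    using LR_sum K by (intro divide_right_mono) simp_all
  then have "?G * (real (N - k) / (2 * K)) \<le> ?G * ((\<Sum>j\<in>?Z. ?L j) / K)"
    using G_nonneg mult_left_mono by fastforce
  also have "\<dots> = (\<Sum>j\<in>?Z. ?G * ?L j / K)"
    by (simp add: sum_distrib_left sum_divide_distrib)
  also have "\<dots> \<le> (\<Sum>j\<in>?Z. ?G * ?L j / ?L i)"
  proof (rule sum_mono)
    fix j
    show "?G * ?L j / K \<le> ?G * ?L j / ?L i"
      using LR_i K L_pos[of i] L_pos[of j] G_nonneg by (intro divide_left_mono) simp_all
  qed
  also have "\<dots> = (\<Sum>j\<in>?Z. obs_density N v (move_entry i j x) y)"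
  proof (rule sum.cong)
    fix j assume "j \<in> ?Z"
    then have "j < N" and "i \<noteq> j" and "x j = 0"
      using x(2) by auto
    from obs_density_move_entry[of v i N j x y, OF v i this] have "?G * ?L j = obs_density N v (move_entry i j x) y * ?L i"
      by simp
    then show "?G * ?L j / ?L i = obs_density N v (move_entry i j x) y"
      using L_pos[of i] by simp
  qed simp
  finally show ?thesis .
qed

lemma active_weight_le:
  assumes v: "v > 0" and U: "finite U" and i: "i < N" and K: "K > 0" and k: "k < N"
    and LR_i: "\<forall>u\<in>U. likelihood_ratio v u (y i) \<le> K"
    and LR_sum: "\<forall>u\<in>U. real (N - k) / 2 + real k * K \<le> (\<Sum>j<N. min (likelihood_ratio v u (y j)) K)"
  shows "active_weight U N k v i y \<le> 2 * real k * K / real (N - k) * inactive_weight U N k v i y"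
proof -
  let ?X = "sparse_set U N k"
  have "active_weight U N k v i y * (real (N - k) / (2 * K))
      = (\<Sum>x\<in>{x\<in>?X. x i \<noteq> 0}. obs_density N v x y * (real (N - k) / (2 * K)))"
    unfolding active_weight_def by (rule sum_distrib_right)
  also have "\<dots> \<le> (\<Sum>x\<in>{x\<in>?X. x i \<noteq> 0}. \<Sum>j\<in>{j. j < N \<and> x j = 0}. obs_density N v (move_entry i j x) y)"
    using LR_i LR_sum sparse_setD(2) i
    by (intro sum_mono obs_density_le_sum_move_entry[OF v i K]) auto
  also have "\<dots> \<le> real k * inactive_weight U N k v i y"
    unfolding inactive_weight_def using sum_move_entry_le[OF U i, of "\<lambda>x. obs_density N v x y"]
    by (simp add: obs_density_nonneg)
  finally show ?thesis
    using k K by (simp add: field_simps)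
qed

section \<open>The error of an arbitrary estimator\<close>

lemma cross_term_le:
  fixes s B S T \<eta> :: real
  assumes S: "0 \<le> S" and T: "0 \<le> T" and \<eta>: "0 \<le> \<eta>"
  shows "2 * s * (B * S) \<le> s\<^sup>2 * (S + T) + B\<^sup>2 * S * (\<eta> + of_bool (\<eta> * T < S))"
proof (cases "\<eta> * T < S")
  case True
  have "2 * s * (B * S) \<le> s\<^sup>2 * S + B\<^sup>2 * S"
    using mult_right_mono[OF zero_le_power2[of "s - B"] S] by (simp add: power2_eq_square algebra_simps)
  also have "\<dots> \<le> s\<^sup>2 * (S + T) + B\<^sup>2 * S * (\<eta> + 1)"
    using S T \<eta> by (simp add: algebra_simps)
  finally show ?thesis
    using True by simp
next
  case False
  show ?thesis
  proof (cases "T = 0")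
    case True
    then show ?thesis
      using False S by simp
  next
    case T_nz: False
    \<comment> \<open>AM-GM in the form \<open>2 s B S \<le> s\<^sup>2 T + B\<^sup>2 S\<^sup>2 / T\<close>, then \<open>S \<le> \<eta> T\<close>.\<close>
    have "T * (s\<^sup>2 * T + B\<^sup>2 * S * \<eta> - 2 * s * (B * S)) = (s * T - B * S)\<^sup>2 + B\<^sup>2 * S * (\<eta> * T - S)"
      by (simp add: power2_eq_square algebra_simps)
    also have "\<dots> \<ge> 0"
      using False S by simp
    finally have "0 \<le> s\<^sup>2 * T + B\<^sup>2 * S * \<eta> - 2 * s * (B * S)"
      using T T_nz by (simp add: zero_le_mult_iff)
    moreover have "s\<^sup>2 * T \<le> s\<^sup>2 * (S + T)"
      using S by (simp add: mult_left_mono)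
    ultimately show ?thesis
      using False by simp
  qed
qed

lemma weighted_sum_square_le:
  fixes w c :: "'a \<Rightarrow> real"
  assumes A: "finite A" and w: "\<And>a. a \<in> A \<Longrightarrow> 0 \<le> w a" and c: "\<And>a. a \<in> A \<Longrightarrow> \<bar>c a\<bar> \<le> B"
    and \<eta>: "0 \<le> \<eta>"
  defines "S \<equiv> \<Sum>a\<in>{a\<in>A. c a \<noteq> 0}. w a" and "T \<equiv> \<Sum>a\<in>{a\<in>A. c a = 0}. w a"
  shows "(\<Sum>a\<in>A. w a * (c a)\<^sup>2) \<le> (\<Sum>a\<in>A. w a * (c a - t)\<^sup>2) + B\<^sup>2 * S * (\<eta> + of_bool (\<eta> * T < S))"
proof -
  define C where "C = (\<Sum>a\<in>A. w a * c a)"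
  have S0: "0 \<le> S" and T0: "0 \<le> T"
    unfolding S_def T_def using w by (auto intro!: sum_nonneg)
  have sum_w: "(\<Sum>a\<in>A. w a) = S + T"
    unfolding S_def T_def using A by (subst sum.union_disjoint[symmetric]) (auto intro!: sum.cong)
  have "\<bar>C\<bar> \<le> (\<Sum>a\<in>A. \<bar>w a * c a\<bar>)"
    unfolding C_def by (rule sum_abs)
  also have "\<dots> = (\<Sum>a\<in>{a\<in>A. c a \<noteq> 0}. \<bar>w a * c a\<bar>)"
    using A by (intro sum.mono_neutral_right) auto
  also have "\<dots> \<le> (\<Sum>a\<in>{a\<in>A. c a \<noteq> 0}. w a * B)"
    using w c by (intro sum_mono) (auto simp: abs_mult intro!: mult_left_mono)
  finally have C_le: "\<bar>C\<bar> \<le> B * S"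
    unfolding S_def by (simp add: sum_distrib_left mult.commute)
  have "(\<Sum>a\<in>A. w a * (c a - t)\<^sup>2) = (\<Sum>a\<in>A. w a * (c a)\<^sup>2 - 2 * t * (w a * c a) + t\<^sup>2 * w a)"
    by (intro sum.cong refl) (simp add: power2_eq_square algebra_simps)
  also have "\<dots> = (\<Sum>a\<in>A. w a * (c a)\<^sup>2) - 2 * t * C + t\<^sup>2 * (S + T)"
    unfolding C_def sum_w[symmetric] by (simp add: sum.distrib sum_subtractf sum_distrib_left)
  finally have expand: "(\<Sum>a\<in>A. w a * (c a - t)\<^sup>2) = (\<Sum>a\<in>A. w a * (c a)\<^sup>2) - 2 * t * C + t\<^sup>2 * (S + T)" .
  have "2 * t * C \<le> 2 * \<bar>t\<bar> * (B * S)"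
    using C_le abs_ge_self[of "t * C"] mult_left_mono[OF C_le abs_ge_zero[of t]] by (simp add: abs_mult)
  also have "\<dots> \<le> \<bar>t\<bar>\<^sup>2 * (S + T) + B\<^sup>2 * S * (\<eta> + of_bool (\<eta> * T < S))"
    by (rule cross_term_le[OF S0 T0 \<eta>])
  finally show ?thesis
    using expand by simp
qed

definition high_odds :: "real set \<Rightarrow> nat \<Rightarrow> nat \<Rightarrow> real \<Rightarrow> real \<Rightarrow> nat \<Rightarrow> (nat \<Rightarrow> real) set" where
  "high_odds U N k v \<eta> i = {y \<in> space (PiM {..<N} (\<lambda>_. lborel)).
     \<eta> * inactive_weight U N k v i y < active_weight U N k v i y}"

lemma sets_high_odds [measurable]: "high_odds U N k v \<eta> i \<in> sets (PiM {..<N} (\<lambda>_. lborel))"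
  unfolding high_odds_def by measurable

lemma observe_high_odds_subset:
  assumes v: "v > 0" and U: "finite U" and a: "\<And>u. u \<in> U \<Longrightarrow> \<bar>u\<bar> \<le> a" and \<delta>: "\<delta> \<ge> 0"
    and K: "K = exp ((a\<^sup>2 / 2 + a * \<delta>) / v)" and k: "k < N" and i: "i < N"
    and x: "x \<in> sparse_set U N k" "x i \<noteq> 0"
  defines "Z \<equiv> {j. j < N \<and> x j = 0}" and "c \<equiv> real (N - k) / 2 + real k * K"
  shows "{\<omega> \<in> space (noise_measure N v). observe N x \<omega> \<in> high_odds U N k v (2 * real k * K / real (N - k)) i}
    \<subseteq> {\<omega> \<in> space (noise_measure N v). \<delta> < \<bar>\<omega> i\<bar>}
      \<union> (\<Union>u\<in>U. {\<omega> \<in> space (noise_measure N v). (\<Sum>j\<in>Z. min (likelihood_ratio v u (\<omega> j)) K) < c})"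
proof (rule subsetI)
  fix \<omega> assume \<omega>: "\<omega> \<in> {\<omega> \<in> space (noise_measure N v).
    observe N x \<omega> \<in> high_odds U N k v (2 * real k * K / real (N - k)) i}"
  let ?y = "observe N x \<omega>" and ?L = "\<lambda>u t. likelihood_ratio v u t"
  have "0 < K"
    using K by simp
  from \<omega> have "\<not> active_weight U N k v i ?y \<le> 2 * real k * K / real (N - k) * inactive_weight U N k v i ?y"
    by (simp add: high_odds_def not_le)
  then consider (peak) u where "u \<in> U" "K < ?L u (?y i)"
    | (spread) u where "u \<in> U" "(\<Sum>j<N. min (?L u (?y j)) K) < c"
    using active_weight_le[OF v U i \<open>0 < K\<close> k] unfolding c_def by (meson not_le)
  then show "\<omega> \<in> {\<omega> \<in> space (noise_measure N v). \<delta> < \<bar>\<omega> i\<bar>}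
      \<union> (\<Union>u\<in>U. {\<omega> \<in> space (noise_measure N v). (\<Sum>j\<in>Z. min (?L u (\<omega> j)) K) < c})"
  proof cases
    case peak
    have "\<delta> < \<bar>\<omega> i\<bar>"
    proof (rule ccontr)
      assume "\<not> \<delta> < \<bar>\<omega> i\<bar>"
      moreover have "?y i = x i + \<omega> i"
        using i by (simp add: observe_def)
      ultimately have "\<bar>?y i\<bar> \<le> a + \<delta>"
        using a[OF sparse_setD(2)[OF x(1) i x(2)]] abs_triangle_ineq[of "x i" "\<omega> i"] by linarith
      then have "?L u (?y i) \<le> K"
        using likelihood_ratio_le[OF v \<delta> a[OF peak(1)]] K by simp
      then show False
        using peak(2) by simp
    qed
    then show ?thesis
      using \<omega> by simp
  next
    case spread
    have "(\<Sum>j\<in>Z. min (?L u (\<omega> j)) K) = (\<Sum>j\<in>Z. min (?L u (?y j)) K)"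
      by (intro sum.cong refl) (simp add: Z_def observe_def)
    also have "\<dots> \<le> (\<Sum>j<N. min (?L u (?y j)) K)"
      using likelihood_ratio_pos \<open>0 < K\<close> by (intro sum_mono2) (auto simp: Z_def less_imp_le)
    finally have "(\<Sum>j\<in>Z. min (?L u (\<omega> j)) K) < c"
      using spread(2) by linarith
    then show ?thesis
      using spread(1) \<omega> by blast
  qed
qed

lemma chernoff_exponent_le:
  assumes K: "1 \<le> K"
  shows "exp ((real n / 2 + real k * K) / (4 * K)) * (1 - 9 / (64 * K)) ^ n
    \<le> exp (real k / 4 - real n / (64 * K))"
proof -
  let ?A = "(real n / 2 + real k * K) / (4 * K)" and ?d = "9 / (64 * K)"
  have "1 - ?d \<le> exp (- ?d)" and "0 \<le> 1 - ?d"
    using K exp_ge_add_one_self[of "- ?d"] by simp_all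
  then have "(1 - ?d) ^ n \<le> exp (- ?d) ^ n"
    by (rule power_mono)
  also have "\<dots> = exp (- (real n * ?d))"
    by (simp add: exp_of_nat_mult[symmetric])
  finally have "exp ?A * (1 - ?d) ^ n \<le> exp ?A * exp (- (real n * ?d))"
    by (rule mult_left_mono) simp
  also have "\<dots> = exp (?A - real n * ?d)"
    unfolding exp_add[symmetric] by simp
  also have "?A - real n * ?d = real k / 4 - real n / (64 * K)"
    using K by (simp add: field_simps)
  finally show ?thesis .
qed

lemma emeasure_observe_high_odds_le:
  assumes v: "v > 0" and U: "finite U" and U_bound: "\<And>u. u \<in> U \<Longrightarrow> \<bar>u\<bar> \<le> a" and \<delta>: "\<delta> > 0"
    and small: "v / \<delta>\<^sup>2 \<le> 1/4" and K: "K = exp ((a\<^sup>2 / 2 + a * \<delta>) / v)" and k: "k < N" and i: "i < N"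
    and x: "x \<in> sparse_set U N k" "x i \<noteq> 0"
  shows "emeasure (noise_measure N v)
      {\<omega> \<in> space (noise_measure N v). observe N x \<omega> \<in> high_odds U N k v (2 * real k * K / real (N - k)) i}
    \<le> ennreal (v / \<delta>\<^sup>2 + real (card U) * exp (real k / 4 - real (N - k) / (64 * K)))"
proof -
  let ?M = "noise_measure N v" and ?Z = "{j. j < N \<and> x j = 0}"
  let ?c = "real (N - k) / 2 + real k * K" and ?e = "exp (real k / 4 - real (N - k) / (64 * K))"
  let ?A = "{\<omega> \<in> space ?M. \<delta> < \<bar>\<omega> i\<bar>}"
  let ?B = "\<lambda>u. {\<omega> \<in> space ?M. (\<Sum>j\<in>?Z. min (likelihood_ratio v u (\<omega> j)) K) < ?c}"
  have "0 \<le> a"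
    using U_bound[OF sparse_setD(2)[OF x(1) i x(2)]] by linarith
  then have K1: "1 \<le> K"
    using K v \<delta> by simp
  have [measurable]: "(\<lambda>\<omega>. \<Sum>j\<in>?Z. min (likelihood_ratio v u (\<omega> j)) K) \<in> borel_measurable ?M" for u
    by (rule borel_measurable_noise_measure_sum) (force, measurable)
  have [measurable]: "(\<lambda>\<omega>. \<omega> i) \<in> borel_measurable ?M"
    by (rule borel_measurable_noise_measure_component[OF i])
  have B_sets: "?B u \<in> sets ?M" for u
    by measurable
  then have UB_sets: "(\<Union>u\<in>U. ?B u) \<in> sets ?M"
    using U by (intro sets.finite_UN) auto
  have "emeasure ?M {\<omega> \<in> space ?M. observe N x \<omega> \<in> high_odds U N k v (2 * real k * K / real (N - k)) i}
      \<le> emeasure ?M (?A \<union> (\<Union>u\<in>U. ?B u))"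
    using UB_sets
    by (intro emeasure_mono[OF observe_high_odds_subset[OF v U U_bound less_imp_le[OF \<delta>] K k i x]]) measurable
  also have "\<dots> \<le> emeasure ?M ?A + emeasure ?M (\<Union>u\<in>U. ?B u)"
    using UB_sets by (intro emeasure_subadditive) measurable
  also have "\<dots> \<le> ennreal (v / \<delta>\<^sup>2) + (\<Sum>u\<in>U. emeasure ?M (?B u))"
    using emeasure_noise_measure_abs_gt[OF v \<delta> i] U B_sets
    by (intro add_mono emeasure_subadditive_finite) auto
  also have "\<dots> \<le> ennreal (v / \<delta>\<^sup>2) + (\<Sum>u\<in>U. ennreal ?e)"
  proof (intro add_left_mono sum_mono)
    fix u assume "u \<in> U"
    have "emeasure ?M (?B u) \<le> ennreal (exp (?c / (4 * K)) * (1 - 9 / (64 * K)) ^ card ?Z)"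
      using K by (intro emeasure_noise_measure_sum_min_likelihood_ratio_lt[OF v \<delta> U_bound[OF \<open>u \<in> U\<close>] _ small]) auto
    also have "\<dots> \<le> ennreal ?e"
      using chernoff_exponent_le[OF K1, of "N - k" k] card_zeros_sparse_set[OF x(1)] by (simp add: ennreal_leI)
    finally show "emeasure ?M (?B u) \<le> ennreal ?e" .
  qed
  also have "\<dots> = ennreal (v / \<delta>\<^sup>2) + ennreal (real (card U) * ?e)"
    by (subst sum_ennreal) simp_all
  also have "\<dots> = ennreal (v / \<delta>\<^sup>2 + real (card U) * ?e)"
    using v by (intro ennreal_plus[symmetric]) simp_all
  finally show ?thesis .
qed

lemma sum_obs_density_energy_le:
  assumes U: "finite U" and U_bound: "\<And>u. u \<in> U \<Longrightarrow> \<bar>u\<bar> \<le> a" and a: "0 \<le> a" and \<eta>: "0 \<le> \<eta>"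
    and y: "y \<in> space (PiM {..<N} (\<lambda>_. lborel))"
  shows "(\<Sum>x\<in>sparse_set U N k. obs_density N v x y * (\<Sum>i<N. (x i)\<^sup>2))
    \<le> (\<Sum>x\<in>sparse_set U N k. obs_density N v x y * ((\<Sum>i<N. (x i - t i)\<^sup>2)
        + a\<^sup>2 * (\<Sum>i\<in>{i. i < N \<and> x i \<noteq> 0}. \<eta> + indicator (high_odds U N k v \<eta> i) y)))"
proof -
  let ?X = "sparse_set U N k" and ?G = "\<lambda>x. obs_density N v x y"
  let ?odds = "\<lambda>i. \<eta> + indicator (high_odds U N k v \<eta> i) y :: real"
  have finX: "finite ?X"
    by (rule finite_sparse_set[OF U])
  have coordinate: "(\<Sum>x\<in>?X. ?G x * (x i)\<^sup>2)
      \<le> (\<Sum>x\<in>?X. ?G x * (x i - t i)\<^sup>2) + a\<^sup>2 * active_weight U N k v i y * ?odds i" if "i < N" for i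
  proof -
    have "\<bar>x i\<bar> \<le> a" if "x \<in> ?X" for x
      using U_bound sparse_setD(2)[OF that \<open>i < N\<close>] a by (cases "x i = 0") auto
    moreover have "?odds i = \<eta> + of_bool (\<eta> * inactive_weight U N k v i y < active_weight U N k v i y)"
      using y by (simp add: high_odds_def)
    ultimately show ?thesis
      using weighted_sum_square_le[OF finX, of ?G "\<lambda>x. x i" a \<eta> "t i"] \<eta>
      by (simp add: obs_density_nonneg active_weight_def inactive_weight_def)
  qed
  have "(\<Sum>x\<in>?X. ?G x * (\<Sum>i<N. (x i)\<^sup>2)) = (\<Sum>i<N. \<Sum>x\<in>?X. ?G x * (x i)\<^sup>2)"
    by (simp add: sum_distrib_left sum.swap[of _ ?X])
  also have "\<dots> \<le> (\<Sum>i<N. (\<Sum>x\<in>?X. ?G x * (x i - t i)\<^sup>2) + a\<^sup>2 * active_weight U N k v i y * ?odds i)"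
    by (intro sum_mono coordinate) simp
  also have "\<dots> = (\<Sum>x\<in>?X. ?G x * (\<Sum>i<N. (x i - t i)\<^sup>2))
      + a\<^sup>2 * (\<Sum>i<N. \<Sum>x\<in>{x\<in>?X. x i \<noteq> 0}. ?G x * ?odds i)"
    by (simp add: sum.distrib sum_distrib_left sum_distrib_right sum.swap[of _ ?X] active_weight_def
        mult.assoc)
  also have "(\<Sum>i<N. \<Sum>x\<in>{x\<in>?X. x i \<noteq> 0}. ?G x * ?odds i) = (\<Sum>x\<in>?X. ?G x * (\<Sum>i\<in>{i. i < N \<and> x i \<noteq> 0}. ?odds i))"
    using sum.swap_restrict[OF finite_lessThan finX, of "\<lambda>i x. ?G x * ?odds i" "\<lambda>i x. x i \<noteq> 0"]
    by (simp add: sum_distrib_left)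
  finally show ?thesis
    by (simp add: sum.distrib sum_distrib_left algebra_simps)
qed

lemma nn_integral_indicator_observe:
  assumes "H \<in> sets (PiM {..<N} (\<lambda>_. lborel))"
  shows "(\<integral>\<^sup>+\<omega>. indicator H (observe N x \<omega>) \<partial>noise_measure N v)
    = emeasure (noise_measure N v) {\<omega> \<in> space (noise_measure N v). observe N x \<omega> \<in> H}"
proof -
  let ?E = "{\<omega> \<in> space (noise_measure N v). observe N x \<omega> \<in> H}"
  have E: "?E = observe N x -` H \<inter> space (noise_measure N v)"
    by auto
  have "(\<integral>\<^sup>+\<omega>. indicator H (observe N x \<omega>) \<partial>noise_measure N v) = (\<integral>\<^sup>+\<omega>. indicator ?E \<omega> \<partial>noise_measure N v)"
    by (intro nn_integral_cong) (simp add: indicator_def)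
  also have "\<dots> = emeasure (noise_measure N v) ?E"
    unfolding E using measurable_sets[OF borel_measurable_observe assms] by simp
  finally show ?thesis .
qed

lemma nn_integral_penalty_le:
  assumes v: "v > 0" and U: "finite U" and U_bound: "\<And>u. u \<in> U \<Longrightarrow> \<bar>u\<bar> \<le> a" and \<delta>: "\<delta> > 0"
    and small: "v / \<delta>\<^sup>2 \<le> 1/4" and K: "K = exp ((a\<^sup>2 / 2 + a * \<delta>) / v)" and k: "k < N"
    and x: "x \<in> sparse_set U N k"
  defines "\<eta> \<equiv> 2 * real k * K / real (N - k)"
    and "\<epsilon> \<equiv> v / \<delta>\<^sup>2 + real (card U) * exp (real k / 4 - real (N - k) / (64 * K))"
  shows "(\<integral>\<^sup>+\<omega>. ennreal (a\<^sup>2 * (\<Sum>i\<in>{i. i < N \<and> x i \<noteq> 0}. \<eta> + indicator (high_odds U N k v \<eta> i) (observe N x \<omega>)))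
      \<partial>noise_measure N v)
    \<le> ennreal (a\<^sup>2 * (\<eta> + \<epsilon>) * real k)"
proof -
  let ?M = "noise_measure N v" and ?S = "{i. i < N \<and> x i \<noteq> 0}"
  let ?H = "\<lambda>i. high_odds U N k v \<eta> i"
  interpret prob_space ?M
    by (rule prob_space_noise_measure[OF v])
  have \<eta>0: "0 \<le> \<eta>"
    unfolding \<eta>_def K by simp
  have \<epsilon>0: "0 \<le> \<epsilon>"
    unfolding \<epsilon>_def using v by (intro add_nonneg_nonneg mult_nonneg_nonneg) simp_all
  have "(\<integral>\<^sup>+\<omega>. ennreal (a\<^sup>2 * (\<Sum>i\<in>?S. \<eta> + indicator (?H i) (observe N x \<omega>))) \<partial>?M)
      = (\<integral>\<^sup>+\<omega>. ennreal (a\<^sup>2) * (\<Sum>i\<in>?S. ennreal \<eta> + indicator (?H i) (observe N x \<omega>)) \<partial>?M)"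
    using \<eta>0 by (intro nn_integral_cong)
      (simp add: ennreal_mult sum_nonneg sum_ennreal[symmetric] ennreal_plus ennreal_indicator)
  also have "\<dots> = ennreal (a\<^sup>2) * (\<Sum>i\<in>?S. ennreal \<eta> + emeasure ?M {\<omega> \<in> space ?M. observe N x \<omega> \<in> ?H i})"
    by (simp add: nn_integral_cmult nn_integral_sum nn_integral_add emeasure_space_1
        nn_integral_indicator_observe)
  also have "\<dots> \<le> ennreal (a\<^sup>2) * (\<Sum>i\<in>?S. ennreal \<eta> + ennreal \<epsilon>)"
    unfolding \<eta>_def \<epsilon>_def
    by (intro mult_left_mono sum_mono add_left_mono emeasure_observe_high_odds_le[OF v U U_bound \<delta> small K k])
      (auto intro: x)
  also have "(\<Sum>i\<in>?S. ennreal \<eta> + ennreal \<epsilon>) = ennreal (real k * (\<eta> + \<epsilon>))"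
  proof -
    have "(\<Sum>i\<in>?S. ennreal \<eta> + ennreal \<epsilon>) = (\<Sum>i\<in>?S. ennreal (\<eta> + \<epsilon>))"
      using \<eta>0 \<epsilon>0 by (simp add: ennreal_plus)
    also have "\<dots> = ennreal (\<Sum>i\<in>?S. \<eta> + \<epsilon>)"
      by (rule sum_ennreal) (use \<eta>0 \<epsilon>0 in simp)
    finally show ?thesis
      using sparse_setD(1)[OF x] by simp
  qed
  also have "ennreal (a\<^sup>2) * ennreal (real k * (\<eta> + \<epsilon>)) = ennreal (a\<^sup>2 * (\<eta> + \<epsilon>) * real k)"
    using \<eta>0 \<epsilon>0 by (subst ennreal_mult[symmetric]) (simp_all add: mult_ac)
  finally show ?thesis .
qed

lemma sum_ennreal_mult_mono:
  assumes "\<And>x. x \<in> X \<Longrightarrow> 0 \<le> w x" and "\<And>x. x \<in> X \<Longrightarrow> 0 \<le> f x" and "\<And>x. x \<in> X \<Longrightarrow> 0 \<le> g x"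
    and "(\<Sum>x\<in>X. w x * f x) \<le> (\<Sum>x\<in>X. w x * g x)"
  shows "(\<Sum>x\<in>X. ennreal (w x) * ennreal (f x)) \<le> (\<Sum>x\<in>X. ennreal (w x) * ennreal (g x))"
proof -
  have "(\<Sum>x\<in>X. ennreal (w x) * ennreal (h x)) = ennreal (\<Sum>x\<in>X. w x * h x)"
    if "\<And>x. x \<in> X \<Longrightarrow> 0 \<le> h x" for h
  proof -
    have "(\<Sum>x\<in>X. ennreal (w x) * ennreal (h x)) = (\<Sum>x\<in>X. ennreal (w x * h x))"
      using assms(1) that by (intro sum.cong refl) (simp add: ennreal_mult)
    also have "\<dots> = ennreal (\<Sum>x\<in>X. w x * h x)"
      using assms(1) that by (intro sum_ennreal) simp
    finally show ?thesis .
  qed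
  then show ?thesis
    using assms by (simp add: ennreal_leI)
qed

lemma sum_energy_le_sum_error:
  fixes xh :: "(nat \<Rightarrow> real) \<Rightarrow> nat \<Rightarrow> real"
  assumes v: "v > 0" and U: "finite U" and U_bound: "\<And>u. u \<in> U \<Longrightarrow> \<bar>u\<bar> \<le> a" and a: "0 \<le> a"
    and \<delta>: "\<delta> > 0" and small: "v / \<delta>\<^sup>2 \<le> 1/4" and K: "K = exp ((a\<^sup>2 / 2 + a * \<delta>) / v)" and k: "k < N"
    and xh: "\<And>i. i < N \<Longrightarrow> (\<lambda>y. xh y i) \<in> borel_measurable (PiM {..<N} (\<lambda>_. lborel))"
  defines "\<eta> \<equiv> 2 * real k * K / real (N - k)"
    and "\<epsilon> \<equiv> v / \<delta>\<^sup>2 + real (card U) * exp (real k / 4 - real (N - k) / (64 * K))"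
  shows "ennreal (\<Sum>x\<in>sparse_set U N k. \<Sum>i<N. (x i)\<^sup>2)
    \<le> (\<Sum>x\<in>sparse_set U N k. \<integral>\<^sup>+\<omega>. ennreal (\<Sum>i<N. (x i - xh (observe N x \<omega>) i)\<^sup>2) \<partial>noise_measure N v)
      + ennreal (a\<^sup>2 * (\<eta> + \<epsilon>) * real k * real (card (sparse_set U N k)))"
proof -
  let ?X = "sparse_set U N k" and ?LB = "PiM {..<N} (\<lambda>_. lborel :: real measure)" and ?M = "noise_measure N v"
  let ?G = "\<lambda>x y. obs_density N v x y"
  let ?err = "\<lambda>x y. \<Sum>i<N. (x i - xh y i)\<^sup>2"
  let ?pen = "\<lambda>x y. a\<^sup>2 * (\<Sum>i\<in>{i. i < N \<and> x i \<noteq> 0}. \<eta> + indicator (high_odds U N k v \<eta> i) y)"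
  interpret prob_space ?M
    by (rule prob_space_noise_measure[OF v])
  have finX: "finite ?X"
    by (rule finite_sparse_set[OF U])
  have \<eta>0: "0 \<le> \<eta>"
    unfolding \<eta>_def K by simp
  have [measurable]: "?err x \<in> borel_measurable ?LB" for x
    by (intro borel_measurable_sum borel_measurable_power borel_measurable_diff borel_measurable_const xh) simp
  have [measurable]: "?pen x \<in> borel_measurable ?LB" for x
    by measurable
  have err_pen_nonneg: "0 \<le> ?err x y" "0 \<le> ?pen x y" for x y
    using \<eta>0 by (simp_all add: sum_nonneg)
  have "ennreal (\<Sum>x\<in>?X. \<Sum>i<N. (x i)\<^sup>2) = (\<Sum>x\<in>?X. \<integral>\<^sup>+\<omega>. ennreal (\<Sum>i<N. (x i)\<^sup>2) \<partial>?M)"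
    by (simp add: emeasure_space_1 sum_ennreal sum_nonneg)
  also have "\<dots> = (\<integral>\<^sup>+y. (\<Sum>x\<in>?X. ennreal (?G x y) * ennreal (\<Sum>i<N. (x i)\<^sup>2)) \<partial>?LB)"
    by (rule nn_integral_sum_obs_density[OF v finX, symmetric]) simp
  also have "\<dots> \<le> (\<integral>\<^sup>+y. (\<Sum>x\<in>?X. ennreal (?G x y) * ennreal (?err x y + ?pen x y)) \<partial>?LB)"
    using sum_obs_density_energy_le[OF U U_bound a \<eta>0, where k = k and v = v and t = "xh y" for y] err_pen_nonneg
    by (intro nn_integral_mono sum_ennreal_mult_mono) (simp_all add: obs_density_nonneg sum_nonneg)
  also have "\<dots> = (\<Sum>x\<in>?X. \<integral>\<^sup>+\<omega>. ennreal (?err x (observe N x \<omega>) + ?pen x (observe N x \<omega>)) \<partial>?M)"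
    by (rule nn_integral_sum_obs_density[OF v finX]) measurable
  also have "\<dots> \<le> (\<Sum>x\<in>?X. (\<integral>\<^sup>+\<omega>. ennreal (?err x (observe N x \<omega>)) \<partial>?M) + ennreal (a\<^sup>2 * (\<eta> + \<epsilon>) * real k))"
    using err_pen_nonneg nn_integral_penalty_le[OF v U U_bound \<delta> small K k, folded \<eta>_def \<epsilon>_def]
    by (intro sum_mono) (simp add: ennreal_plus nn_integral_add add_left_mono)
  also have "\<dots> = (\<Sum>x\<in>?X. \<integral>\<^sup>+\<omega>. ennreal (?err x (observe N x \<omega>)) \<partial>?M)
      + ennreal (a\<^sup>2 * (\<eta> + \<epsilon>) * real k * real (card ?X))"
    by (simp add: sum.distrib ennreal_of_nat_eq_real_of_nat ennreal_mult'[symmetric] mult.commute)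
  finally show ?thesis .
qed

section \<open>The normalised excess\<close>

lemma neg_le_normalised_difference:
  fixes R :: ennreal and m k :: nat
  assumes m: "0 < m" and k: "0 < k" and c: "0 \<le> c" and le: "ennreal E \<le> R + ennreal (c * real k * real m)"
  shows "- ereal c \<le> (enn2ereal (R / of_nat m) - ereal (E / real m)) / ereal (real k)"
proof (cases "R = top")
  case True
  then show ?thesis
    using m k by (simp add: ennreal_top_divide)
next
  case False
  then obtain r where r: "R = ennreal r" "0 \<le> r"
    by (cases R) auto
  have "ennreal E \<le> ennreal (r + c * real k * real m)"
    using le r c by (simp add: ennreal_plus)
  then have "E \<le> r + c * real k * real m"
    using r c by (subst (asm) ennreal_le_iff) auto
  then have "- c \<le> (r / real m - E / real m) / real k"
    using m k by (simp add: field_simps)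
  moreover have "R / of_nat m = ennreal (r / real m)"
    using r m by (simp add: ennreal_of_nat_eq_real_of_nat divide_ennreal)
  ultimately show ?thesis
    using r m k by (simp add: enn2ereal_ennreal)
qed

lemma neg_le_excess:
  fixes xh :: "(nat \<Rightarrow> real) \<Rightarrow> nat \<Rightarrow> real"
  assumes U: "finite U" and c: "0 \<le> c" and k: "0 < k"
    and le: "ennreal (\<Sum>x\<in>sparse_set U N k. \<Sum>i<N. (x i)\<^sup>2)
      \<le> (\<Sum>x\<in>sparse_set U N k. \<integral>\<^sup>+\<omega>. ennreal (\<Sum>i<N. (x i - xh (observe N x \<omega>) i)\<^sup>2)
            \<partial>noise_measure N (s2 / ln (real N / real k)))
        + ennreal (c * real k * real (card (sparse_set U N k)))"
  shows "- ereal c \<le> excess U s2 N k xh"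
proof (cases "sparse_set U N k = {}")
  case True
  then have "excess U s2 N k xh = 0"
    by (simp add: excess_def mse_def signal_energy_def zero_ennreal.rep_eq)
  then show ?thesis
    using c by (simp add: zero_ereal_def)
next
  case False
  then have "0 < card (sparse_set U N k)"
    using finite_sparse_set[OF U] by (simp add: card_gt_0_iff)
  then show ?thesis
    unfolding excess_def mse_def signal_energy_def using k c le by (intro neg_le_normalised_difference)
qed

lemma exp_chernoff_exponent_le:
  assumes k: "1 \<le> k" "k < N" and K: "0 < K"
    and small: "real k / real N * K \<le> (1 - real k / real N) / 16"
  shows "exp (real k / 4 - real (N - k) / (64 * K))
    \<le> 64 * exp (1/4) * (real k / real N * K) / (1 - real k / real N)"
proof -
  define r where "r = real k / real N"
  define X where "X = (1 - r) / (64 * (r * K))"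
  have r: "0 < r" "r < 1"
    unfolding r_def using k by auto
  have X: "1/4 \<le> X"
    unfolding X_def using r K small[folded r_def] by (simp add: field_simps)
  have "real (N - k) / (64 * K) = real k * X"
    unfolding X_def r_def using k K by (simp add: of_nat_diff field_simps)
  then have "real k / 4 - real (N - k) / (64 * K) \<le> 1/4 - X"
    using k X mult_right_mono[of 1 "real k" "X - 1/4"] by (simp add: algebra_simps)
  then have "exp (real k / 4 - real (N - k) / (64 * K)) \<le> exp (1/4 - X)"
    by simp
  also have "\<dots> = exp (1/4) / exp X"
    by (rule exp_diff)
  also have "\<dots> \<le> exp (1/4) / X"
  proof -
    have "X \<le> exp X"
      using exp_ge_add_one_self[of X] by linarith
    then show ?thesis
      using X by (intro divide_left_mono) (simp_all add: zero_less_mult_iff)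
  qed
  also have "\<dots> = 64 * exp (1/4) * (r * K) / (1 - r)"
    unfolding X_def using r K by (simp add: field_simps)
  finally show ?thesis
    unfolding r_def .
qed

definition excess_bound :: "nat \<Rightarrow> real \<Rightarrow> real \<Rightarrow> real \<Rightarrow> real \<Rightarrow> real" where
  "excess_bound m a c \<theta> r = a\<^sup>2 * ((2 + 64 * exp (1/4) * real m) * r powr (1 - \<theta>) / (1 - r) + c / ln (1 / r))"

lemma error_terms_le:
  fixes k N :: nat and K m :: real
  defines "r \<equiv> real k / real N"
  assumes k: "1 \<le> k" "k < N" and K: "0 < K" and m: "0 \<le> m" and small: "r * K \<le> (1 - r) / 16"
  shows "2 * real k * K / real (N - k) + m * exp (real k / 4 - real (N - k) / (64 * K))
    \<le> (2 + 64 * exp (1/4) * m) * (r * K) / (1 - r)"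
proof -
  have "2 * real k * K / real (N - k) = 2 * (r * K) / (1 - r)"
    unfolding r_def using k by (simp add: of_nat_diff field_simps)
  then have "2 * real k * K / real (N - k) + m * exp (real k / 4 - real (N - k) / (64 * K))
      = 2 * (r * K) / (1 - r) + m * exp (real k / 4 - real (N - k) / (64 * K))"
    by simp
  also have "\<dots> \<le> 2 * (r * K) / (1 - r) + m * (64 * exp (1/4) * (r * K) / (1 - r))"
    using exp_chernoff_exponent_le[OF k K] small m unfolding r_def by (intro add_left_mono mult_left_mono) simp_all
  also have "\<dots> = (2 + 64 * exp (1/4) * m) * (r * K) / (1 - r)"
    by (simp add: distrib_right add_divide_distrib)
  finally show ?thesis .
qed

lemma powr_one_minus_eq:
  fixes r :: real
  assumes "0 < r"
  shows "r powr (1 - \<theta>) = r * exp (\<theta> * ln (1 / r))"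
proof -
  have "r powr (1 - \<theta>) = r powr 1 * r powr (- \<theta>)"
    using powr_add[of r 1 "- \<theta>"] by simp
  also have "\<dots> = r * exp (\<theta> * ln (1 / r))"
    using assms by (simp add: powr_def ln_div)
  finally show ?thesis .
qed

lemma excess_ge_neg_excess_bound:
  fixes xh :: "(nat \<Rightarrow> real) \<Rightarrow> nat \<Rightarrow> real" and a \<delta> s2 :: real and k N :: nat
  defines "\<theta> \<equiv> (a\<^sup>2 / 2 + a * \<delta>) / s2" and "r \<equiv> real k / real N"
  assumes U: "finite U" and U_bound: "\<And>u. u \<in> U \<Longrightarrow> \<bar>u\<bar> \<le> a" and a: "0 \<le> a"
    and s2: "s2 > 0" and \<delta>: "\<delta> > 0" and k: "1 \<le> k" "k < N"
    and xh: "\<And>i. i < N \<Longrightarrow> (\<lambda>y. xh y i) \<in> borel_measurable (PiM {..<N} (\<lambda>_. lborel))"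
    and small_noise: "s2 / \<delta>\<^sup>2 / ln (1 / r) \<le> 1/4" and small_ratio: "r powr (1 - \<theta>) \<le> (1 - r) / 16"
  shows "- ereal (excess_bound (card U) a (s2 / \<delta>\<^sup>2) \<theta> r) \<le> excess U s2 N k xh"
proof -
  define v where "v = s2 / ln (real N / real k)"
  define K where "K = exp ((a\<^sup>2 / 2 + a * \<delta>) / v)"
  define \<eta> where "\<eta> = 2 * real k * K / real (N - k)"
  define \<epsilon> where "\<epsilon> = v / \<delta>\<^sup>2 + real (card U) * exp (real k / 4 - real (N - k) / (64 * K))"
  have r: "0 < r" "r < 1"
    unfolding r_def using k by auto
  have L: "ln (real N / real k) = ln (1 / r)" "0 < ln (1 / r)"
    unfolding r_def using k by simp_all
  have v: "0 < v" and small: "v / \<delta>\<^sup>2 \<le> 1/4" and v_eq: "v / \<delta>\<^sup>2 = s2 / \<delta>\<^sup>2 / ln (1 / r)"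
    using s2 small_noise L by (simp_all add: v_def field_simps)
  have "K = exp (\<theta> * ln (1 / r))"
    unfolding K_def v_def \<theta>_def L(1) using L(2) s2 by (simp add: field_simps)
  then have rK: "r * K = r powr (1 - \<theta>)"
    using powr_one_minus_eq[OF r(1)] by simp
  have K0: "0 < K"
    unfolding K_def by simp
  have "r * K \<le> (1 - r) / 16"
    using small_ratio rK by simp
  from error_terms_le[OF k K0 _ this[unfolded r_def], of "real (card U)", folded r_def]
  have "\<eta> + \<epsilon> \<le> (2 + 64 * exp (1/4) * real (card U)) * r powr (1 - \<theta>) / (1 - r) + s2 / \<delta>\<^sup>2 / ln (1 / r)"
    unfolding \<eta>_def \<epsilon>_def rK v_eq by simp
  then have bound: "a\<^sup>2 * (\<eta> + \<epsilon>) \<le> excess_bound (card U) a (s2 / \<delta>\<^sup>2) \<theta> r"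
    unfolding excess_bound_def by (simp add: mult_left_mono)
  have "0 \<le> \<eta>" "0 \<le> \<epsilon>"
    unfolding \<eta>_def \<epsilon>_def using v K0 by simp_all
  then have "- ereal (a\<^sup>2 * (\<eta> + \<epsilon>)) \<le> excess U s2 N k xh"
    using sum_energy_le_sum_error[where xh = xh, OF v U U_bound a \<delta> small K_def k(2) xh] k(1)
    by (intro neg_le_excess U) (simp_all add: v_def \<eta>_def \<epsilon>_def mult_ac)
  then show ?thesis
    using bound by (simp add: order_trans[rotated])
qed

section \<open>Asymptotics\<close>

lemma tendsto_div_ln_inverse_at_right_0: "((\<lambda>r. c / ln (1 / r)) \<longlongrightarrow> 0) (at_right (0::real))"
proof -
  have "filterlim (\<lambda>r. - ln r) at_top (at_right (0::real))"
    using ln_at_0 filterlim_uminus_at_top[of "\<lambda>r. - ln r"] by simp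
  then have "((\<lambda>r. c / - ln r) \<longlongrightarrow> 0) (at_right (0::real))"
    by (intro tendsto_divide_0[OF tendsto_const] filterlim_at_top_imp_at_infinity)
  moreover have "\<forall>\<^sub>F r in at_right (0::real). c / - ln r = c / ln (1 / r)"
    by (simp add: eventually_at_filter ln_div)
  ultimately show ?thesis
    by (rule Lim_transform_eventually)
qed

lemma tendsto_powr_at_right_0: "0 < e \<Longrightarrow> ((\<lambda>r. r powr e) \<longlongrightarrow> 0) (at_right (0::real))"
  by (intro tendsto_zero_powrI tendsto_ident_at tendsto_const) (simp_all add: eventually_at_filter)

lemma excess_bound_tendsto_0:
  assumes "\<theta> < 1"
  shows "(excess_bound m a c \<theta> \<longlongrightarrow> 0) (at_right 0)"
proof -
  have "((\<lambda>r. a\<^sup>2 * ((2 + 64 * exp (1/4) * real m) * r powr (1 - \<theta>) / (1 - r) + c / ln (1 / r))) \<longlongrightarrow>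
      a\<^sup>2 * ((2 + 64 * exp (1/4) * real m) * 0 / (1 - 0) + 0)) (at_right 0)"
    using assms
    by (intro tendsto_intros tendsto_powr_at_right_0 tendsto_div_ln_inverse_at_right_0 tendsto_ident_at) simp_all
  then show ?thesis
    unfolding excess_bound_def[abs_def] by simp
qed

lemma eventually_small_at_right_0:
  fixes c \<theta> :: real
  assumes "\<theta> < 1"
  shows "\<forall>\<^sub>F r in at_right 0. c / ln (1 / r) \<le> 1/4 \<and> r powr (1 - \<theta>) \<le> (1 - r) / 16"
proof -
  have "\<forall>\<^sub>F r in at_right 0. c / ln (1 / r) < 1/4"
    by (rule order_tendstoD(2)[OF tendsto_div_ln_inverse_at_right_0]) simp
  moreover have "((\<lambda>r. r powr (1 - \<theta>) - (1 - r) / 16) \<longlongrightarrow> 0 - (1 - 0) / 16) (at_right (0::real))"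
    using assms by (intro tendsto_intros tendsto_powr_at_right_0 tendsto_ident_at) simp_all
  then have "\<forall>\<^sub>F r in at_right (0::real). r powr (1 - \<theta>) - (1 - r) / 16 < 0"
    by (rule order_tendstoD(2)) simp
  ultimately show ?thesis
    by eventually_elim simp
qed

lemma ratio_tendsto_at_right_0:
  fixes k :: "nat \<Rightarrow> nat"
  assumes k: "\<And>N. 1 \<le> k N" and ratio: "(\<lambda>N. ln (real (k N)) / ln (real N)) \<longlonglongrightarrow> \<gamma>" and \<gamma>: "\<gamma> < 1"
  shows "filterlim (\<lambda>N. real (k N) / real N) (at_right 0) sequentially"
proof -
  define b where "b = (1 + \<gamma>) / 2"
  have b: "\<gamma> < b" "b < 1"
    using \<gamma> by (simp_all add: b_def)
  have pos: "\<forall>\<^sub>F N in sequentially. 0 < real (k N) / real N"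
  proof (rule eventually_mono[OF eventually_gt_at_top[of 0]])
    fix N :: nat assume "0 < N"
    then show "0 < real (k N) / real N"
      using k[of N] by simp
  qed
  have "filterlim (\<lambda>N. (1 - b) * ln (real N)) at_top sequentially"
    using b by (intro filterlim_tendsto_pos_mult_at_top[OF tendsto_const]
        filterlim_compose[OF ln_at_top filterlim_real_sequentially]) simp_all
  moreover have "\<forall>\<^sub>F N in sequentially. (1 - b) * ln (real N) \<le> - ln (real (k N) / real N)"
    using order_tendstoD(2)[OF ratio b(1)] eventually_gt_at_top[of 1]
  proof eventually_elim
    case (elim N)
    have "0 < real (k N)"
      using k[of N] by simp
    moreover have "ln (real (k N)) \<le> b * ln (real N)"
      using elim by (simp add: divide_less_eq less_imp_le)
    ultimately show ?case
      using elim by (simp add: ln_div algebra_simps)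
  qed
  ultimately have "filterlim (\<lambda>N. - ln (real (k N) / real N)) at_top sequentially"
    by (rule filterlim_at_top_mono)
  then have "filterlim (\<lambda>N. ln (real (k N) / real N)) at_bot sequentially"
    using filterlim_uminus_at_top[of "\<lambda>N. - ln (real (k N) / real N)"] by simp
  then have "((\<lambda>N. exp (ln (real (k N) / real N))) \<longlongrightarrow> 0) sequentially"
    by (rule filterlim_compose[OF exp_at_bot])
  moreover have "\<forall>\<^sub>F N in sequentially. exp (ln (real (k N) / real N)) = real (k N) / real N"
    using pos by eventually_elim simp
  ultimately have "((\<lambda>N. real (k N) / real N) \<longlongrightarrow> 0) sequentially"
    by (rule Lim_transform_eventually)
  then show ?thesis
    using pos by (rule tendsto_imp_filterlim_at_right)
qed

lemma liminf_nonneg_if_eventually_ge: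
  assumes "\<forall>\<^sub>F n in sequentially. - ereal (b n) \<le> f n" and "b \<longlonglongrightarrow> 0"
  shows "0 \<le> liminf f"
proof -
  have "liminf (\<lambda>n. - ereal (b n)) = - ereal 0"
    using assms(2) by (intro lim_imp_Liminf tendsto_uminus_ereal tendsto_ereal) simp_all
  moreover have "liminf (\<lambda>n. - ereal (b n)) \<le> liminf f"
    by (rule Liminf_mono[OF assms(1)])
  ultimately show ?thesis
    by (simp add: zero_ereal_def)
qed

lemma Max_abs_pos:
  fixes U :: "real set"
  assumes "finite U" and "U \<noteq> {}" and "0 \<notin> U"
  shows "0 < Max (abs ` U)"
proof -
  obtain u where "u \<in> U"
    using assms(2) by blast
  moreover from this have "0 < \<bar>u\<bar>"
    using assms(3) by (cases "u = 0") auto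
  ultimately show ?thesis
    using assms(1) by (meson Max_ge finite_imageI image_eqI less_le_trans)
qed

text \<open>This choice of \<open>\<delta>\<close> makes the exponent \<open>1/2 + a\<^sup>2 / (4 s2)\<close>; it is below \<open>1\<close> exactly when
  \<open>s2 > a\<^sup>2 / 2\<close>.\<close>

lemma exponent_lt_one:
  fixes a s2 :: real
  assumes a: "0 < a" and s2: "a\<^sup>2 / 2 < s2"
  defines "\<delta> \<equiv> (s2 - a\<^sup>2 / 2) / (2 * a)"
  shows "0 < \<delta>" and "(a\<^sup>2 / 2 + a * \<delta>) / s2 < 1"
proof -
  show "0 < \<delta>"
    unfolding \<delta>_def using a s2 by simp
  have "a * \<delta> = (s2 - a\<^sup>2 / 2) / 2"
    unfolding \<delta>_def using a by (simp add: field_simps)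
  moreover have "0 < s2"
    using s2 zero_le_power2[of a] by linarith
  ultimately show "(a\<^sup>2 / 2 + a * \<delta>) / s2 < 1"
    using s2 by (simp add: field_simps)
qed

theorem theorem2:
  fixes U :: "real set" and s2 :: real and \<gamma> :: real
    and k :: "nat \<Rightarrow> nat"
    and xh :: "nat \<Rightarrow> (nat \<Rightarrow> real) \<Rightarrow> (nat \<Rightarrow> real)"
  defines "umin \<equiv> Min (abs ` U)" and "umax \<equiv> Max (abs ` U)"
  defines "C0 \<equiv> s2 / umax\<^sup>2 * (1 - umax\<^sup>2 / (2 * s2))"
  defines "C1 \<equiv> s2 / (2 * umax\<^sup>2) * (1 - umax\<^sup>2 / (2 * s2))\<^sup>2 + (umax - umin / 2)\<^sup>2 / (2 * s2)"
  assumes U_fin: "finite U" and U_ne: "U \<noteq> {}" and U_nz: "0 \<notin> U"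
    and s2_pos: "s2 > 0"
    and s2_big: "s2 > umax\<^sup>2 / 2"
    and k_ge1: "\<forall>N. 1 \<le> k N"
    and k_lt: "\<forall>\<^sub>F N in sequentially. k N < N"
    and k_inf: "filterlim k at_top sequentially"
    and ratio: "(\<lambda>N. ln (real (k N)) / ln (real N)) \<longlonglongrightarrow> \<gamma>"
    and \<gamma>_lt: "\<gamma> < min (C0 / (C0 + s2 / (umax * umin))) (min (C1 / (C1 + 3)) (1/2))"
    and xh_meas: "\<forall>N. \<forall>i<N. (\<lambda>y. xh N y i) \<in> borel_measurable (PiM {..<N} (\<lambda>_. lborel))"
  shows "liminf (\<lambda>N. excess U s2 N (k N) (xh N)) \<ge> 0"
proof -
  have U_bound: "\<And>u. u \<in> U \<Longrightarrow> \<bar>u\<bar> \<le> umax"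
    unfolding umax_def using U_fin by (intro Max_ge) auto
  have umax: "0 < umax"
    unfolding umax_def using U_fin U_ne U_nz by (rule Max_abs_pos)
  define \<delta> where "\<delta> = (s2 - umax\<^sup>2 / 2) / (2 * umax)"
  define \<theta> where "\<theta> = (umax\<^sup>2 / 2 + umax * \<delta>) / s2"
  have \<delta>: "0 < \<delta>" and \<theta>: "\<theta> < 1"
    using exponent_lt_one[OF umax s2_big] unfolding \<delta>_def \<theta>_def by simp_all
  have r: "filterlim (\<lambda>N. real (k N) / real N) (at_right 0) sequentially"
    using \<gamma>_lt k_ge1 by (intro ratio_tendsto_at_right_0[OF _ ratio]) auto
  have "\<forall>\<^sub>F N in sequentially.
      - ereal (excess_bound (card U) umax (s2 / \<delta>\<^sup>2) \<theta> (real (k N) / real N)) \<le> excess U s2 N (k N) (xh N)"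
    using eventually_compose_filterlim[OF eventually_small_at_right_0[OF \<theta>, where c = "s2 / \<delta>\<^sup>2"] r] k_lt
  proof eventually_elim
    case (elim N)
    then show ?case
      unfolding \<theta>_def using U_fin U_bound umax s2_pos \<delta> k_ge1 xh_meas
      by (intro excess_ge_neg_excess_bound) auto
  qed
  moreover have "(\<lambda>N. excess_bound (card U) umax (s2 / \<delta>\<^sup>2) \<theta> (real (k N) / real N)) \<longlonglongrightarrow> 0"
    by (rule filterlim_compose[OF excess_bound_tendsto_0[OF \<theta>] r])
  ultimately show ?thesis
    by (rule liminf_nonneg_if_eventually_ge)
qed

end
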